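(* Consider the multi-task in-context regression setting described in the context (noiseless labels, prompt-augmented linear predictor). Let $\mathbf{W}^\star_{\mathrm{PT}}$ be a minimizer of the plain-training objective $\mathbf{W}\mapsto \mathcal{L}(\mathbf{W},\mathbf{P}=\mathbf{0})$ over $\mathbf{W}\in\mathbb{R}^{d\times d}$, let $\mathcal{L}^\star_{\mathrm{PT}}=\mathcal{L}(\mathbf{W}^\star_{\mathrm{PT}},\mathbf{0})$, and set $\bar{\mathbf{W}}^\star_{\mathrm{PT}}=\boldsymbol{\Sigma}_x\mathbf{W}^\star_{\mathrm{PT}}$. Then \[ \bar{\mathbf{W}}^\star_{\mathrm{PT}}=\tilde{\boldsymbol{\Sigma}}_\beta\left((n+1)\tilde{\boldsymbol{\Sigma}}_\beta+\mathrm{tr}(\tilde{\boldsymbol{\Sigma}}_\beta)\mathbf{I}\right)^{-1},\qquad \mathcal{L}^\star_{\mathrm{PT}}=\mathrm{tr}(\tilde{\boldsymbol{\Sigma}}_\beta)-n\,\mathrm{tr}\!\left(\bar{\mathbf{W}}^\star_{\mathrm{PT}}\tilde{\boldsymbol{\Sigma}}_\beta\right). \]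
   Context: Fix integers $n,d,K\ge 1$, a covariance $\boldsymbol{\Sigma}_x\in\mathbb{R}^{d\times d}$, $\boldsymbol{\Sigma}_x\succ 0$, and for each task $k\in[K]$ a mean $\boldsymbol{\mu}_k\in\mathbb{R}^d$, a covariance $\boldsymbol{\Sigma}_{\beta_k}\succ 0$, and a probability $\pi_k\ge 0$ with $\sum_k\pi_k=1$. The data distribution $\mathcal{D}_k$ of task $k$: draw $\boldsymbol{\beta}\sim\mathcal{N}(\boldsymbol{\mu}_k,\boldsymbol{\Sigma}_{\beta_k})$, then independently $\mathbf{x}_1,\dots,\mathbf{x}_{n+1}\sim\mathcal{N}(0,\boldsymbol{\Sigma}_x)$ i.i.d., and set $y_i=\mathbf{x}_i^\top\boldsymbol{\beta}$ (noiseless). Write $\mathbf{X}=[\mathbf{x}_1\ \cdots\ \mathbf{x}_n]^\top\in\mathbb{R}^{n\times d}$, $\mathbf{y}=(y_1,\dots,y_n)^\top$, $\mathbf{x}=\mathbf{x}_{n+1}$, $y=y_{n+1}$. For $\mathbf{W}\in\mathbb{R}^{d\times d}$ and a task-specific prompt vector $\bar{\mathbf{p}}_k\in\mathbb{R}^d$ the predictor for task $k$ is $f=\mathbf{x}^\top\mathbf{W}(\mathbf{X}^\top\mathbf{y}+\bar{\mathbf{p}}_k)$ (this is a one-layer linear attention model with an appended prompt token under a fixed preconditioning parametrization). With $\mathbf{P}=[\bar{\mathbf{p}}_1\ \cdots\ \bar{\mathbf{p}}_K]^\top\in\mathbb{R}^{K\times d}$, the multi-task loss is $\mathcal{L}(\mathbf{W},\mathbf{P})=\sum_{k=1}^K\pi_k\,\mathbb{E}_{\mathcal{D}_k}\big[(\mathbf{x}^\top\mathbf{W}(\mathbf{X}^\top\mathbf{y}+\bar{\mathbf{p}}_k)-y)^2\big]$.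 Define $\tilde{\boldsymbol{\Sigma}}_\beta=\boldsymbol{\Sigma}_x\sum_{k=1}^K\pi_k(\boldsymbol{\Sigma}_{\beta_k}+\boldsymbol{\mu}_k\boldsymbol{\mu}_k^\top)$ (the "biased" mixed-task covariance). *)

theory Defs
  imports "HOL-Analysis.Analysis" "HOL-Probability.Probability"
begin

definition pos_def_mat :: "real^'d^'d \<Rightarrow> bool" where
  "pos_def_mat S \<longleftrightarrow> transpose S = S \<and> (\<forall>v. v \<noteq> 0 \<longrightarrow> v \<bullet> (S *v v) > 0)"

definition outer :: "real^'d \<Rightarrow> real^'d \<Rightarrow> real^'d^'d" where
  "outer u v = (\<chi> i j. u $ i * v $ j)"

definition gauss_density :: "real^'d \<Rightarrow> real^'d^'d \<Rightarrow> real^'d \<Rightarrow> real" where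
  "gauss_density mu S v =
     exp (- (1/2) * ((v - mu) \<bullet> (matrix_inv S *v (v - mu))))
     / sqrt ((2 * pi) ^ CARD('d) * det S)"

definition mvn :: "real^'d \<Rightarrow> real^'d^'d \<Rightarrow> (real^'d) measure" where
  "mvn mu S = density lborel (\<lambda>v. ennreal (gauss_density mu S v))"

text \<open>Task distribution D_k: beta ~ N(mu, Sb), and xs i ~ N(0, Sx) i.i.d. for i = 0..n;
  xs 0, ..., xs (n-1) are the rows of X, xs n is the query x.\<close>
definition task_measure :: "nat \<Rightarrow> real^'d^'d \<Rightarrow> real^'d \<Rightarrow> real^'d^'d
     \<Rightarrow> ((real^'d) \<times> (nat \<Rightarrow> real^'d)) measure" where
  "task_measure n Sx mu Sb = mvn mu Sb \<Otimes>\<^sub>M (\<Pi>\<^sub>M i\<in>{..n}. mvn 0 Sx)"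

text \<open>Prediction x^T W (X^T y + p) with y_i = x_i^T beta.\<close>
definition predictor :: "nat \<Rightarrow> real^'d^'d \<Rightarrow> real^'d \<Rightarrow> real^'d \<Rightarrow> (nat \<Rightarrow> real^'d) \<Rightarrow> real" where
  "predictor n W p beta xs =
     xs n \<bullet> (W *v ((\<Sum>i<n. (xs i \<bullet> beta) *\<^sub>R xs i) + p))"

definition mt_loss :: "nat \<Rightarrow> real^'d^'d \<Rightarrow> ('k::finite \<Rightarrow> real) \<Rightarrow> ('k \<Rightarrow> real^'d)
     \<Rightarrow> ('k \<Rightarrow> real^'d^'d) \<Rightarrow> real^'d^'d \<Rightarrow> ('k \<Rightarrow> real^'d) \<Rightarrow> real" where
  "mt_loss n Sx prob mu Sb W P =
     (\<Sum>k\<in>UNIV. prob k * (\<integral>z. (predictor n W (P k) (fst z) (snd z) - snd z n \<bullet> fst z)\<^sup>2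
                                 \<partial>task_measure n Sx (mu k) (Sb k)))"

definition Sigma_tilde :: "real^'d^'d \<Rightarrow> ('k::finite \<Rightarrow> real) \<Rightarrow> ('k \<Rightarrow> real^'d)
     \<Rightarrow> ('k \<Rightarrow> real^'d^'d) \<Rightarrow> real^'d^'d" where
  "Sigma_tilde Sx prob mu Sb = Sx ** (\<Sum>k\<in>UNIV. prob k *\<^sub>R (Sb k + outer (mu k) (mu k)))"

end

theory Submission
  imports Defs
begin

text \<open>
  Write \<open>S\<close> for \<open>Sx\<close> and \<open>M = \<Sum>\<^sub>k prob k (Sb k + mu k mu k\<^sup>T)\<close>, so that
  \<open>Sigma_tilde Sx prob mu Sb = S M\<close>.
  Every Gaussian \<open>N(\<mu>, S)\<close> is the image of the standard Gaussian under \<open>u \<mapsto> \<mu> + L u\<close>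
  with \<open>S = L L\<^sup>T\<close>, and the standard Gaussian is a product of one-dimensional ones; this gives
  its second moments and Isserlis' formula for its fourth moments. Integrating out the query and
  then the \<open>n\<close> context points, the loss of a task with task vector \<open>\<beta>\<close> is a quadratic form
  \<open>\<beta>\<^sup>T Q(W) \<beta>\<close>, so the multi-task loss is \<open>tr (Q(W) M)\<close>. With
  \<open>G = (n + 1) S M + tr (S M) I\<close> and \<open>P = G S\<close> (positive definite) this equals
  \<open>n (tr (P W\<^sup>T S W) - 2 tr (W\<^sup>T S M S)) + tr (S M)\<close>, a strictly convex quadratic in \<open>W\<close>.
  Completing the square identifies the unique minimizer as the stationary point \<open>S W G = S M\<close>.
\<close>

section \<open>Matrix algebra\<close>

lemma matrix_inv_right:
  fixes A :: "'a::semiring_1^'n^'n"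
  assumes "invertible A"
  shows "A ** matrix_inv A = mat 1"
  using someI_ex[OF assms[unfolded invertible_def]] by (simp add: matrix_inv_def)

lemma matrix_inv_left:
  fixes A :: "'a::semiring_1^'n^'n"
  assumes "invertible A"
  shows "matrix_inv A ** A = mat 1"
  using someI_ex[OF assms[unfolded invertible_def]] by (simp add: matrix_inv_def)

lemma matrix_inv_unique:
  fixes A B :: "'a::semiring_1^'n^'n"
  assumes "invertible A" and "A ** B = mat 1"
  shows "matrix_inv A = B"
  by (metis assms matrix_inv_left matrix_mul_assoc matrix_mul_lid matrix_mul_rid)

lemma matrix_add_rdistrib:
  fixes A B :: "'a::semiring_1^'n^'m" and C :: "'a^'p^'n"
  shows "(A + B) ** C = A ** C + B ** C"
  by (simp add: matrix_matrix_mult_def vec_eq_iff sum.distrib distrib_right)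

lemma matrix_diff_rdistrib:
  fixes A B :: "'a::ring_1^'n^'m" and C :: "'a^'p^'n"
  shows "(A - B) ** C = A ** C - B ** C"
  by (simp add: matrix_matrix_mult_def vec_eq_iff sum_subtractf left_diff_distrib)

lemma transpose_add: "transpose (A + B) = transpose A + transpose (B :: 'a::semiring_1^'n^'m)"
  by (simp add: transpose_def vec_eq_iff)

lemma inner_transpose_matrix:
  fixes A :: "real^'n^'m"
  shows "x \<bullet> (transpose A *v y) = (A *v x) \<bullet> y"
  by (metis dot_lmul_matrix inner_commute transpose_matrix_vector)

lemma inner_matrix_vector_eq_transpose:
  fixes L :: "real^'n::finite^'m::finite"
  shows "a \<bullet> (L *v u) = (transpose L *v a) \<bullet> u"
  using inner_transpose_matrix[of a "transpose L" u] by simp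

lemma inner_transpose_transpose:
  fixes L :: "real^'n::finite^'m::finite"
  shows "(transpose L *v a) \<bullet> (transpose L *v b) = a \<bullet> ((L ** transpose L) *v b)"
  by (simp only: inner_matrix_vector_eq_transpose[symmetric] matrix_vector_mul_assoc)

lemma inner_symmetric_matrix:
  fixes S :: "real^'n^'n"
  assumes "transpose S = S"
  shows "x \<bullet> (S *v y) = y \<bullet> (S *v x)"
  by (metis assms inner_commute inner_transpose_matrix)

lemma inner_matrix_vector_sum_rows:
  fixes Q :: "real^'n::finite^'m::finite"
  shows "x \<bullet> (Q *v y) = (\<Sum>k\<in>UNIV. (axis k 1 \<bullet> x) * (Q $ k \<bullet> y))"
proof -
  have "axis k 1 \<bullet> x = x $ k" for k
    by (simp add: inner_axis')
  then show ?thesis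
    by (simp add: inner_vec_def matrix_vector_mult_def)
qed

lemma outer_mult_vector: "outer u u *v v = (u \<bullet> v) *\<^sub>R u"
  by (simp add: outer_def matrix_vector_mult_def inner_vec_def vec_eq_iff sum_distrib_left mult_ac)

lemma trace_scaleR: "trace (c *\<^sub>R A) = c * trace (A :: real^'n^'n)"
  by (simp add: trace_def sum_distrib_left)

lemma trace_transpose: "trace (transpose A) = trace (A :: 'a::semiring_1^'n^'n)"
  by (simp add: trace_def transpose_def)

lemma trace_outer: "trace (Q ** outer u u) = u \<bullet> (Q *v u)"
  by (simp add: trace_def matrix_matrix_mult_def outer_def inner_vec_def matrix_vector_mult_def
      sum_distrib_left mult_ac)

lemma trace_mul_scaleR_sum:
  fixes Q :: "real^'d::finite^'d" and X :: "'k \<Rightarrow> real^'d^'d"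
  assumes "finite K"
  shows "trace (Q ** (\<Sum>k\<in>K. c k *\<^sub>R X k)) = (\<Sum>k\<in>K. c k * trace (Q ** X k))"
proof -
  have "trace (Q ** (c *\<^sub>R X)) = c * trace (Q ** X)" for c and X :: "real^'d^'d"
    by (simp add: trace_def matrix_matrix_mult_def sum_distrib_left mult_ac)
  with assms show ?thesis
    by induction (simp_all add: matrix_add_ldistrib trace_add, simp add: trace_def matrix_matrix_mult_def)
qed

lemma sum_diag_eq_trace:
  fixes Q S :: "real^'n::finite^'n"
  assumes "transpose S = S"
  shows "(\<Sum>k\<in>UNIV. axis k 1 \<bullet> (S *v Q $ k)) = trace (Q ** S)"
proof -
  have "S $ j $ k = S $ k $ j" for j k
    using assms by (metis transpose_def vec_lambda_beta)
  then show ?thesis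
    by (simp add: trace_def matrix_matrix_mult_def matrix_vector_mult_def inner_axis' mult.commute)
qed

lemma trace_symmetric_form_commute:
  fixes P S X Y :: "real^'n^'n"
  assumes "transpose P = P" and "transpose S = S"
  shows "trace (P ** transpose X ** S ** Y) = trace (P ** transpose Y ** S ** X)"
proof -
  have "transpose (P ** transpose X ** S ** Y) = transpose Y ** S ** X ** P"
    by (simp add: matrix_transpose_mul assms matrix_mul_assoc)
  then have "trace (P ** transpose X ** S ** Y) = trace ((transpose Y ** S ** X) ** P)"
    by (metis trace_transpose)
  also have "\<dots> = trace (P ** transpose Y ** S ** X)"
    by (simp add: trace_mul_sym[of _ P] matrix_mul_assoc)
  finally show ?thesis .
qed

lemma trace_transpose_mul_self_pos:
  fixes Y :: "real^'n^'m"
  assumes "Y \<noteq> 0"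
  shows "0 < trace (transpose Y ** Y)"
proof -
  have eq: "trace (transpose Y ** Y) = (\<Sum>i\<in>UNIV. \<Sum>j\<in>UNIV. (Y $ j $ i)\<^sup>2)"
    by (simp add: trace_def matrix_matrix_mult_def transpose_def power2_eq_square)
  obtain i j where "Y $ j $ i \<noteq> 0"
    using assms by (auto simp: vec_eq_iff)
  then have "0 < (\<Sum>j\<in>UNIV. (Y $ j $ i)\<^sup>2)"
    by (intro sum_pos2[of _ j]) auto
  also have "\<dots> \<le> (\<Sum>i\<in>UNIV. \<Sum>j\<in>UNIV. (Y $ j $ i)\<^sup>2)"
    by (intro member_le_sum sum_nonneg) auto
  finally show ?thesis
    unfolding eq .
qed

section \<open>Positive definite matrices\<close>

lemma pos_def_mat_symmetric: "pos_def_mat S \<Longrightarrow> transpose S = S"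
  unfolding pos_def_mat_def by simp

lemma pos_def_mat_nonneg: "pos_def_mat S \<Longrightarrow> 0 \<le> x \<bullet> (S *v x)"
  unfolding pos_def_mat_def by (cases "x = 0") (auto intro: less_imp_le)

lemma pos_def_mat_orthonormal_extend:
  fixes S :: "real^'n^'n"
  assumes pd: "pos_def_mat S" and "finite F" and "card F < CARD('n)"
  obtains q where "q \<bullet> (S *v q) = 1" and "\<And>j. j \<in> F \<Longrightarrow> f j \<bullet> (S *v q) = 0"
proof -
  have "dim ((\<lambda>j. S *v f j) ` F) \<le> card F"
    by (meson assms(2) card_image_le dim_le_card' finite_imageI le_trans)
  then have "dim ((\<lambda>j. S *v f j) ` F) < DIM(real^'n)"
    using assms(3) by simp
  then obtain w where "w \<noteq> 0" and orth: "\<And>y. y \<in> span ((\<lambda>j. S *v f j) ` F) \<Longrightarrow> orthogonal w y"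
    by (rule orthogonal_to_subspace_exists) blast
  have w: "w \<bullet> (S *v f j) = 0" if "j \<in> F" for j
    using orth[OF span_base] that by (auto simp: orthogonal_def)
  have wpos: "w \<bullet> (S *v w) > 0"
    using pd \<open>w \<noteq> 0\<close> unfolding pos_def_mat_def by blast
  define q where "q = (1 / sqrt (w \<bullet> (S *v w))) *\<^sub>R w"
  have "q \<bullet> (S *v q) = 1"
    using wpos by (simp add: q_def matrix_vector_mult_scaleR real_sqrt_mult[symmetric])
  moreover have "f j \<bullet> (S *v q) = 0" if "j \<in> F" for j
    using w[OF that] inner_symmetric_matrix[OF pos_def_mat_symmetric[OF pd], of w "f j"]
    by (simp add: q_def matrix_vector_mult_scaleR)
  ultimately show thesis by (rule that)
qed

lemma pos_def_mat_orthonormal_family: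
  fixes S :: "real^'n^'n"
  assumes pd: "pos_def_mat S"
  shows "\<exists>f::'n \<Rightarrow> real^'n. \<forall>i\<in>F. \<forall>j\<in>F. f i \<bullet> (S *v f j) = of_bool (i = j)"
proof (induction F rule: infinite_finite_induct)
  case (infinite F)
  then show ?case by simp
next
  case empty
  then show ?case by simp
next
  case (insert a F)
  then obtain f where f: "\<forall>i\<in>F. \<forall>j\<in>F. f i \<bullet> (S *v f j) = of_bool (i = j)"
    by blast
  have "card F < CARD('n)"
    using insert.hyps card_mono[of UNIV "insert a F"] by simp
  then obtain q where q: "q \<bullet> (S *v q) = 1" "\<And>j. j \<in> F \<Longrightarrow> f j \<bullet> (S *v q) = 0"
    using pos_def_mat_orthonormal_extend[OF pd insert.hyps(1)] by blast
  have "q \<bullet> (S *v f j) = 0" if "j \<in> F" for j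
    using q(2)[OF that] inner_symmetric_matrix[OF pos_def_mat_symmetric[OF pd]] by metis
  then have "\<forall>i\<in>insert a F. \<forall>j\<in>insert a F. (f(a := q)) i \<bullet> (S *v (f(a := q)) j) = of_bool (i = j)"
    using f q insert.hyps(2) by auto
  then show ?case by blast
qed

lemma pos_def_mat_factor:
  fixes S :: "real^'n^'n"
  assumes pd: "pos_def_mat S"
  obtains L :: "real^'n^'n" where "S = L ** transpose L" and "invertible L"
proof -
  obtain f :: "'n \<Rightarrow> real^'n" where f: "\<And>i j. f i \<bullet> (S *v f j) = of_bool (i = j)"
    using pos_def_mat_orthonormal_family[OF pd, of UNIV] by blast
  define Q :: "real^'n^'n" where "Q = (\<chi> r c. f c $ r)"
  have "(transpose Q ** S ** Q) $ i $ j = f i \<bullet> (S *v f j)" for i j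
  proof -
    have "(transpose Q ** S ** Q) $ i $ j = (\<Sum>k\<in>UNIV. \<Sum>l\<in>UNIV. f i $ l * S $ l $ k * f j $ k)"
      by (simp add: Q_def matrix_matrix_mult_def transpose_def sum_distrib_right)
    also have "\<dots> = f i \<bullet> (S *v f j)"
      by (subst sum.swap) (simp add: inner_vec_def matrix_vector_mult_def sum_distrib_left mult.assoc)
    finally show ?thesis .
  qed
  then have QSQ: "transpose Q ** S ** Q = mat 1"
    using f by (simp add: vec_eq_iff mat_def)
  then have "invertible Q"
    using invertible_left_inverse by blast
  define L where "L = transpose (matrix_inv Q)"
  have "L ** transpose L = L ** (transpose Q ** S ** Q) ** transpose L"
    by (simp add: QSQ)
  also have "\<dots> = (L ** transpose Q) ** S ** (Q ** transpose L)"
    by (simp add: matrix_mul_assoc)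
  also have "L ** transpose Q = mat 1"
    using matrix_inv_right[OF \<open>invertible Q\<close>] by (metis L_def matrix_transpose_mul transpose_mat)
  also have "Q ** transpose L = mat 1"
    using matrix_inv_right[OF \<open>invertible Q\<close>] by (simp add: L_def)
  finally have "S = L ** transpose L"
    by simp
  moreover have "invertible L"
    unfolding L_def using \<open>invertible Q\<close> matrix_inv_left matrix_inv_right
    by (intro transpose_invertible) (auto simp: invertible_def)
  ultimately show thesis
    by (rule that)
qed

lemma pos_def_mat_invertible: "pos_def_mat S \<Longrightarrow> invertible S"
  by (metis invertible_mult pos_def_mat_factor transpose_invertible)

lemma trace_pos_def_quadratic_pos:
  fixes P S D :: "real^'n^'n"
  assumes "pos_def_mat P" and "pos_def_mat S" and "D \<noteq> 0"
  shows "0 < trace (P ** transpose D ** S ** D)"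
proof -
  obtain L :: "real^'n^'n" where L: "P = L ** transpose L" "invertible L"
    using pos_def_mat_factor[OF assms(1)] by blast
  obtain K :: "real^'n^'n" where K: "S = K ** transpose K" "invertible K"
    using pos_def_mat_factor[OF assms(2)] by blast
  define Y where "Y = transpose K ** D ** L"
  have "trace (P ** transpose D ** S ** D) = trace (L ** (transpose L ** transpose D ** K ** transpose K ** D))"
    unfolding L K by (simp add: matrix_mul_assoc)
  also have "\<dots> = trace ((transpose L ** transpose D ** K ** transpose K ** D) ** L)"
    by (rule trace_mul_sym)
  also have "\<dots> = trace (transpose Y ** Y)"
    by (simp add: Y_def matrix_transpose_mul matrix_mul_assoc)
  finally have "trace (P ** transpose D ** S ** D) = trace (transpose Y ** Y)" .
  moreover have "Y \<noteq> 0"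
  proof
    assume "Y = 0"
    have "matrix_inv (transpose K) ** Y ** matrix_inv L
        = (matrix_inv (transpose K) ** transpose K) ** D ** (L ** matrix_inv L)"
      by (simp add: Y_def matrix_mul_assoc)
    also have "\<dots> = D"
      using K(2) L(2) by (simp add: matrix_inv_left matrix_inv_right transpose_invertible)
    finally show False
      using \<open>Y = 0\<close> assms(3) by simp
  qed
  ultimately show ?thesis
    using trace_transpose_mul_self_pos by simp
qed

lemma trace_pos_def_mul_pos:
  fixes S M :: "real^'n^'n"
  assumes "pos_def_mat S" and "pos_def_mat M"
  shows "0 < trace (S ** M)"
proof -
  have "(mat 1 :: real^'n^'n) $ i $ i = 1" for i
    by (simp add: mat_def)
  then have "mat 1 \<noteq> (0 :: real^'n^'n)"
    by (metis zero_index zero_neq_one)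
  then have "0 < trace (S ** transpose (mat 1) ** M ** mat 1)"
    by (rule trace_pos_def_quadratic_pos[OF assms])
  then show ?thesis
    by simp
qed

lemma pos_def_mat_congruence_combination:
  fixes S M :: "real^'n^'n"
  assumes pdS: "pos_def_mat S" and pdM: "pos_def_mat M" and "c \<ge> 0" and "t > 0"
  shows "pos_def_mat (c *\<^sub>R (S ** M ** S) + t *\<^sub>R S)"
  unfolding pos_def_mat_def
proof (intro conjI allI impI)
  have "transpose S = S" and "transpose M = M"
    using pdS pdM by (simp_all add: pos_def_mat_symmetric)
  then show "transpose (c *\<^sub>R (S ** M ** S) + t *\<^sub>R S) = c *\<^sub>R (S ** M ** S) + t *\<^sub>R S"
    by (simp add: transpose_add transpose_scalar matrix_transpose_mul matrix_mul_assoc)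
  fix v :: "real^'n" assume "v \<noteq> 0"
  have "v \<bullet> ((c *\<^sub>R (S ** M ** S) + t *\<^sub>R S) *v v) = c * ((S *v v) \<bullet> (M *v (S *v v))) + t * (v \<bullet> (S *v v))"
    using inner_symmetric_matrix[OF pos_def_mat_symmetric[OF pdS], of v "M *v (S *v v)"]
    by (simp add: matrix_vector_mult_add_rdistrib matrix_vector_mul_assoc[symmetric] inner_add_right
        inner_commute[of "M *v (S *v v)"] flip: scaleR_matrix_vector_assoc)
  moreover have "0 \<le> (S *v v) \<bullet> (M *v (S *v v))" and "0 < v \<bullet> (S *v v)"
    using pos_def_mat_nonneg[OF pdM] pdS \<open>v \<noteq> 0\<close> by (auto simp: pos_def_mat_def)
  ultimately show "0 < v \<bullet> ((c *\<^sub>R (S ** M ** S) + t *\<^sub>R S) *v v)"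
    using assms(3,4) by (simp add: add_nonneg_pos)
qed

lemma pos_def_mat_mixture:
  fixes Sb :: "'k::finite \<Rightarrow> real^'d::finite^'d"
  assumes pd: "\<And>k. pos_def_mat (Sb k)" and nonneg: "\<And>k. prob k \<ge> 0" and sum1: "(\<Sum>k\<in>UNIV. prob k) = 1"
  shows "pos_def_mat (\<Sum>k\<in>UNIV. prob k *\<^sub>R (Sb k + outer (mu k) (mu k)))"
  unfolding pos_def_mat_def
proof (intro conjI allI impI)
  have "transpose (outer u u) = outer u u" for u :: "real^'d"
    by (simp add: outer_def transpose_def vec_eq_iff mult.commute)
  moreover have "transpose (\<Sum>k\<in>K. prob k *\<^sub>R X k) = (\<Sum>k\<in>K. prob k *\<^sub>R transpose (X k))"
    if "finite K" for K and X :: "'k \<Rightarrow> real^'d^'d"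
    using that by induction (simp_all add: transpose_add transpose_scalar, simp add: transpose_def vec_eq_iff)
  ultimately show "transpose (\<Sum>k\<in>UNIV. prob k *\<^sub>R (Sb k + outer (mu k) (mu k)))
      = (\<Sum>k\<in>UNIV. prob k *\<^sub>R (Sb k + outer (mu k) (mu k)))"
    by (simp add: transpose_add pos_def_mat_symmetric[OF pd])
next
  fix v :: "real^'d" assume "v \<noteq> 0"
  define X where "X k = Sb k + outer (mu k) (mu k)" for k
  have term_nonneg: "0 \<le> prob k * (v \<bullet> (X k *v v))" for k
    using nonneg[of k] pos_def_mat_nonneg[OF pd[of k], of v]
    by (simp add: X_def matrix_vector_mult_add_rdistrib inner_add_right outer_mult_vector inner_commute)
  obtain k0 where "prob k0 > 0"
    using sum1 nonneg by (metis less_eq_real_def sum.neutral zero_neq_one)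
  then have "0 < prob k0 * (v \<bullet> (X k0 *v v))"
    using pd[of k0] \<open>v \<noteq> 0\<close> 
    by (simp add: X_def matrix_vector_mult_add_rdistrib inner_add_right pos_def_mat_def add_pos_nonneg
        outer_mult_vector inner_commute)
  also have "\<dots> \<le> (\<Sum>k\<in>UNIV. prob k * (v \<bullet> (X k *v v)))"
    using term_nonneg by (intro member_le_sum) auto
  also have "\<dots> = (\<Sum>k\<in>UNIV. prob k * trace (outer v v ** X k))"
    by (simp add: trace_outer[symmetric] trace_mul_sym[of "outer v v"])
  also have "\<dots> = trace (outer v v ** (\<Sum>k\<in>UNIV. prob k *\<^sub>R X k))"
    by (simp add: trace_mul_scaleR_sum)
  also have "\<dots> = v \<bullet> ((\<Sum>k\<in>UNIV. prob k *\<^sub>R X k) *v v)"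
    by (simp add: trace_mul_sym[of "outer v v"] trace_outer)
  finally show "0 < v \<bullet> ((\<Sum>k\<in>UNIV. prob k *\<^sub>R (Sb k + outer (mu k) (mu k))) *v v)"
    by (simp add: X_def)
qed

section \<open>Linear change of variables\<close>

text \<open>
  The library's \<open>measure_linear_image\<close> needs a wellordered index type, so the change of
  variables is rederived here for an arbitrary finite index type, via the decomposition of an
  invertible linear map into shears, stretches and coordinate swaps.
\<close>

lemma borel_measurable_linear:
  fixes f :: "'a::euclidean_space \<Rightarrow> 'b::euclidean_space"
  shows "linear f \<Longrightarrow> f \<in> borel_measurable borel"
  by (simp add: borel_measurable_continuous_onI linear_continuous_on linear_conv_bounded_linear)

lemma borel_measurable_matrix_vector_mult [measurable]:
  fixes A :: "real^'n^'m"
  shows "(\<lambda>x. A *v x) \<in> borel_measurable borel"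
  by (simp add: borel_measurable_linear)

lemma borel_measurable_vec_lambda_PiM [measurable]:
  "(\<lambda>f. \<chi> i. f i) \<in> borel_measurable (PiM UNIV (\<lambda>_::'n::finite. lborel :: real measure))"
proof -
  have "(\<lambda>f. (\<chi> i. f i) \<bullet> b) \<in> borel_measurable (PiM UNIV (\<lambda>_::'n. lborel :: real measure))"
    if b: "b \<in> Basis" for b :: "real^'n"
  proof -
    obtain j where "b = axis j 1"
      using b by (auto simp: Basis_vec_def)
    then show ?thesis
      using measurable_component_singleton[of j UNIV "\<lambda>_. lborel"] by (simp add: inner_axis)
  qed
  then show ?thesis
    by (subst borel_measurable_euclidean_space) auto
qed

lemma lborel_vec_PiM: "(lborel :: (real^'n::finite) measure) = distr (PiM UNIV (\<lambda>_::'n. lborel)) borel (\<lambda>f. \<chi> i. f i)"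
proof (rule lborel_eqI)
  fix l u :: "real^'n" assume le: "\<And>b. b \<in> Basis \<Longrightarrow> l \<bullet> b \<le> u \<bullet> b"
  have leu: "l $ i \<le> u $ i" for i
    using le[of "axis i 1"] by (auto simp: Basis_vec_def inner_axis)
  interpret product_sigma_finite "\<lambda>_::'n. lborel" by standard
  have pre: "(\<lambda>f. \<chi> i. f i) -` box l u \<inter> space (PiM UNIV (\<lambda>_::'n. lborel)) = (\<Pi>\<^sub>E i\<in>UNIV. {l$i<..<u$i})"
    by (auto simp: space_PiM mem_box_cart PiE_def extensional_def Pi_iff)
  have Basis_eq: "(Basis :: (real^'n) set) = (\<lambda>i. axis i 1) ` UNIV"
    by (auto simp: Basis_vec_def)
  have "emeasure (distr (PiM UNIV (\<lambda>_::'n. lborel)) borel (\<lambda>f. \<chi> i. f i)) (box l u)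
      = emeasure (PiM UNIV (\<lambda>_::'n. lborel)) (\<Pi>\<^sub>E i\<in>UNIV. {l$i<..<u$i})"
    by (subst emeasure_distr) (auto simp: pre)
  also have "\<dots> = (\<Prod>i\<in>UNIV. ennreal (u$i - l$i))"
    using leu by (subst emeasure_PiM) auto
  also have "\<dots> = ennreal (\<Prod>i\<in>UNIV. (u - l) \<bullet> axis i 1)"
    using leu by (simp add: prod_ennreal inner_axis)
  also have "(\<Prod>i\<in>UNIV. (u - l) \<bullet> axis i 1) = (\<Prod>b\<in>Basis. (u - l) \<bullet> b)"
    unfolding Basis_eq by (subst prod.reindex) (auto simp: inj_on_def axis_eq_axis)
  finally show "emeasure (distr (PiM UNIV (\<lambda>_::'n. lborel)) borel (\<lambda>f. \<chi> i. f i)) (box l u)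
      = (\<Prod>b\<in>Basis. (u - l) \<bullet> b)" .
qed simp

lemma nn_integral_lborel_vec_PiM:
  fixes g :: "real^'n::finite \<Rightarrow> ennreal"
  assumes [measurable]: "g \<in> borel_measurable borel"
  shows "(\<integral>\<^sup>+x. g x \<partial>lborel) = (\<integral>\<^sup>+f. g (\<chi> i. f i) \<partial>PiM UNIV (\<lambda>_::'n. lborel))"
  by (subst lborel_vec_PiM) (simp add: nn_integral_distr)

lemma nn_integral_lborel_shear:
  fixes g :: "real^'n::finite \<Rightarrow> ennreal"
  assumes "m \<noteq> k" and g: "g \<in> borel_measurable borel"
  shows "(\<integral>\<^sup>+x. g (\<chi> i. if i = m then x$m + c * x$k else x$i) \<partial>lborel) = (\<integral>\<^sup>+x. g x \<partial>lborel)"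
proof -
  \<comment> \<open>Fubini in coordinate \<open>m\<close>: for fixed other coordinates the shear is a translation.\<close>
  interpret product_sigma_finite "\<lambda>_::'n. lborel :: real measure" by standard
  define sh where "sh x = (\<chi> i. if i = m then x$m + c * x$k else x$i)" for x :: "real^'n"
  have UNIV_eq: "(UNIV :: 'n set) = insert m (UNIV - {m})"
    by auto
  have split: "(\<integral>\<^sup>+x. h x \<partial>lborel)
      = (\<integral>\<^sup>+f. (\<integral>\<^sup>+y. h (\<chi> i. (f(m := y)) i) \<partial>lborel) \<partial>PiM (UNIV - {m}) (\<lambda>_. lborel))"
    if [measurable]: "h \<in> borel_measurable borel" for h :: "real^'n \<Rightarrow> ennreal"
    unfolding nn_integral_lborel_vec_PiM[OF that]
    by (subst UNIV_eq, subst product_nn_integral_insert) (simp_all flip: UNIV_eq)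
  have upd_measurable: "(\<lambda>y. \<chi> i. (f(m := y)) i) \<in> borel_measurable borel" for f :: "'n \<Rightarrow> real"
  proof -
    have "continuous_on UNIV (\<lambda>y. (f(m := y)) i)" for i
      by (cases "i = m") auto
    then show ?thesis
      by (intro borel_measurable_continuous_onI continuous_on_vec_lambda)
  qed
  have shift: "(\<integral>\<^sup>+y. g (sh (\<chi> i. (f(m := y)) i)) \<partial>lborel) = (\<integral>\<^sup>+y. g (\<chi> i. (f(m := y)) i) \<partial>lborel)"
    for f :: "'n \<Rightarrow> real"
  proof -
    have "sh (\<chi> i. (f(m := y)) i) = (\<chi> i. (f(m := c * f k + 1 * y)) i)" for y
      using \<open>m \<noteq> k\<close> by (auto simp: sh_def vec_eq_iff)
    moreover have "(\<integral>\<^sup>+y. g (\<chi> i. (f(m := y)) i) \<partial>lborel)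
        = ennreal \<bar>1\<bar> * (\<integral>\<^sup>+y. g (\<chi> i. (f(m := c * f k + 1 * y)) i) \<partial>lborel)"
      using measurable_compose[OF upd_measurable g] by (rule nn_integral_real_affine) simp
    ultimately show ?thesis
      by simp
  qed
  have "continuous_on UNIV (\<lambda>x. x + (c * x $ k) *\<^sub>R axis m 1)"
    by (intro continuous_intros)
  moreover have "sh = (\<lambda>x. x + (c * x $ k) *\<^sub>R axis m 1)"
    by (auto simp: sh_def vec_eq_iff axis_def)
  ultimately have "sh \<in> borel_measurable borel"
    by (simp add: borel_measurable_continuous_onI)
  then have "(\<integral>\<^sup>+x. g (sh x) \<partial>lborel)
      = (\<integral>\<^sup>+f. (\<integral>\<^sup>+y. g (sh (\<chi> i. (f(m := y)) i)) \<partial>lborel) \<partial>PiM (UNIV - {m}) (\<lambda>_. lborel))"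
    by (rule split[OF measurable_compose[OF _ g]])
  also have "\<dots> = (\<integral>\<^sup>+x. g x \<partial>lborel)"
    by (simp only: shift split[OF g])
  finally show ?thesis
    by (simp only: sh_def)
qed

lemma nn_integral_lborel_stretch:
  fixes g :: "real^'n::finite \<Rightarrow> ennreal" and c :: "'n \<Rightarrow> real"
  assumes c: "\<And>i. c i \<noteq> 0" and [measurable]: "g \<in> borel_measurable borel"
  shows "(\<integral>\<^sup>+x. g x \<partial>lborel) = ennreal \<bar>\<Prod>i\<in>UNIV. c i\<bar> * (\<integral>\<^sup>+x. g (\<chi> i. c i * x$i) \<partial>lborel)"
proof -
  define c' where "c' b = (\<chi> i. c i) \<bullet> b" for b :: "real^'n"
  have Basis_eq: "(Basis :: (real^'n) set) = (\<lambda>i. axis i 1) ` UNIV"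
    by (auto simp: Basis_vec_def)
  have c'_axis: "c' (axis i 1) = c i" for i
    by (simp add: c'_def inner_axis)
  have T: "(\<lambda>x. 0 + (\<Sum>j\<in>Basis. (c' j * (x \<bullet> j)) *\<^sub>R j)) = (\<lambda>x. \<chi> i. c i * x$i)"
  proof
    fix x :: "real^'n"
    show "0 + (\<Sum>j\<in>Basis. (c' j * (x \<bullet> j)) *\<^sub>R j) = (\<chi> i. c i * x$i)"
      unfolding add_0_left euclidean_representation_sum by (auto simp: Basis_eq c'_axis inner_axis)
  qed
  have "(\<Prod>j\<in>Basis. \<bar>c' j\<bar>) = \<bar>\<Prod>i\<in>UNIV. c i\<bar>"
    unfolding Basis_eq by (subst prod.reindex) (auto simp: inj_on_def axis_eq_axis c'_axis abs_prod)
  moreover have "lborel = density (distr lborel borel (\<lambda>x. 0 + (\<Sum>j\<in>Basis. (c' j * (x \<bullet> j)) *\<^sub>R j)))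
      (\<lambda>_. \<Prod>j\<in>Basis. \<bar>c' j\<bar>)"
    by (rule lborel_affine_euclidean) (auto simp: Basis_eq c'_axis c)
  ultimately have lborel_eq: "lborel = density (distr lborel borel (\<lambda>x. \<chi> i. c i * x$i)) (\<lambda>_. \<bar>\<Prod>i\<in>UNIV. c i\<bar>)"
    by (simp only: T)
  have [measurable]: "(\<lambda>x::real^'n. \<chi> i. c i * x$i) \<in> borel_measurable borel"
    by (intro borel_measurable_continuous_onI continuous_intros)
  have "(\<integral>\<^sup>+x. g x \<partial>lborel)
      = (\<integral>\<^sup>+x. g x \<partial>density (distr lborel borel (\<lambda>x. \<chi> i. c i * x$i)) (\<lambda>_. \<bar>\<Prod>i\<in>UNIV. c i\<bar>))"
    by (subst (1) lborel_eq) (rule refl)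
  also have "\<dots> = ennreal \<bar>\<Prod>i\<in>UNIV. c i\<bar> * (\<integral>\<^sup>+x. g (\<chi> i. c i * x$i) \<partial>lborel)"
    by (simp add: nn_integral_density nn_integral_distr nn_integral_cmult)
  finally show ?thesis .
qed

definition lborel_linear_change :: "(real^'n::finite \<Rightarrow> real^'n) \<Rightarrow> bool" where
  "lborel_linear_change f \<longleftrightarrow> (\<forall>g \<in> borel_measurable borel.
     (\<integral>\<^sup>+x. g x \<partial>lborel) = ennreal \<bar>det (matrix f)\<bar> * (\<integral>\<^sup>+x. g (f x) \<partial>lborel))"

lemma lborel_linear_change_comp:
  fixes f h :: "real^'n::finite \<Rightarrow> real^'n"
  assumes "linear f" and "linear h" and "lborel_linear_change f" and "lborel_linear_change h"
  shows "lborel_linear_change (f \<circ> h)"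
  unfolding lborel_linear_change_def
proof
  fix g :: "real^'n \<Rightarrow> ennreal" assume g: "g \<in> borel_measurable borel"
  have "f \<in> borel_measurable borel"
    using assms(1) by (rule borel_measurable_linear)
  then have "(\<lambda>x. g (f x)) \<in> borel_measurable borel"
    using g by measurable
  then have "(\<integral>\<^sup>+x. g (f x) \<partial>lborel) = ennreal \<bar>det (matrix h)\<bar> * (\<integral>\<^sup>+x. g (f (h x)) \<partial>lborel)"
    using bspec[OF assms(4)[unfolded lborel_linear_change_def]] by blast
  moreover have "(\<integral>\<^sup>+x. g x \<partial>lborel) = ennreal \<bar>det (matrix f)\<bar> * (\<integral>\<^sup>+x. g (f x) \<partial>lborel)"
    using bspec[OF assms(3)[unfolded lborel_linear_change_def] g] .
  ultimately show "(\<integral>\<^sup>+x. g x \<partial>lborel) = ennreal \<bar>det (matrix (f \<circ> h))\<bar> * (\<integral>\<^sup>+x. g ((f \<circ> h) x) \<partial>lborel)"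
    using assms(1,2) by (simp add: matrix_compose det_mul abs_mult ennreal_mult mult.assoc)
qed

lemma lborel_linear_change_stretch:
  assumes "\<And>i. c i \<noteq> 0"
  shows "lborel_linear_change (\<lambda>x::real^'n::finite. \<chi> i. c i * x$i)"
proof -
  have "det (matrix (\<lambda>x::real^'n. \<chi> i. c i * x$i)) = (\<Prod>i\<in>UNIV. c i)"
    by (subst det_diagonal) (auto simp: matrix_def axis_def)
  then show ?thesis
    using nn_integral_lborel_stretch[of c] assms by (simp add: lborel_linear_change_def)
qed

lemma lborel_linear_change_shear:
  assumes "m \<noteq> k"
  shows "lborel_linear_change (\<lambda>x::real^'n::finite. \<chi> i. if i = m then x$m + c * x$k else x$i)"
proof -
  have "matrix (\<lambda>x::real^'n. \<chi> i. if i = m then x$m + c * x$k else x$i)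
      = (\<chi> i. if i = m then row m (mat 1) + c *s row k (mat 1) else row i (mat 1))"
    by (auto simp: matrix_def axis_def row_def mat_def vec_eq_iff)
  then have "det (matrix (\<lambda>x::real^'n. \<chi> i. if i = m then x$m + c * x$k else x$i)) = 1"
    using det_row_operation[OF assms, of "mat 1" c] by simp
  then show ?thesis
    using nn_integral_lborel_shear[OF assms] by (simp add: lborel_linear_change_def)
qed

lemma lborel_linear_change_swap:
  fixes m k :: "'n::finite"
  assumes "m \<noteq> k"
  shows "lborel_linear_change (\<lambda>x::real^'n. \<chi> i. x $ Transposition.transpose m k i)"
proof -
  define shear where "shear m k c x = (\<chi> i. if i = m then x$m + c * x$k else x$i)"
    for m k :: 'n and c :: real and x :: "real^'n"
  define flip where "flip x = (\<chi> i. (if i = k then -1 else 1) * x$i)" for x :: "real^'n"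
  have "linear (shear m k c)" for m k c
    by (rule linearI) (auto simp: shear_def vec_eq_iff algebra_simps)
  moreover have "linear flip"
    by (rule linearI) (auto simp: flip_def vec_eq_iff algebra_simps)
  moreover have "lborel_linear_change (shear m k c)" if "m \<noteq> k" for m k c
    unfolding shear_def[abs_def] using that by (rule lborel_linear_change_shear)
  moreover have "lborel_linear_change flip"
    unfolding flip_def[abs_def] by (rule lborel_linear_change_stretch) simp
  ultimately have "lborel_linear_change (flip \<circ> shear m k 1 \<circ> shear k m (-1) \<circ> shear m k 1)"
    using assms by (intro lborel_linear_change_comp linear_compose) auto
  \<comment> \<open>on the coordinates \<open>(m, k)\<close>: \<open>(a, b) \<mapsto> (a + b, b) \<mapsto> (a + b, -a) \<mapsto> (b, -a) \<mapsto> (b, a)\<close>\<close>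
  moreover have "(flip \<circ> shear m k 1 \<circ> shear k m (-1) \<circ> shear m k 1) x $ i = x $ Transposition.transpose m k i"
    for x i
    using assms by (simp add: flip_def shear_def Transposition.transpose_def)
  then have "flip \<circ> shear m k 1 \<circ> shear k m (-1) \<circ> shear m k 1 = (\<lambda>x. \<chi> i. x $ Transposition.transpose m k i)"
    by (simp add: fun_eq_iff vec_eq_iff del: comp_apply)
  ultimately show ?thesis
    by simp
qed

lemma inj_comp_linear:
  fixes f h :: "real^'n::finite \<Rightarrow> real^'n"
  assumes "linear h" and "inj (f \<circ> h)"
  shows "inj f" and "inj h"
proof -
  show "inj h"
    using assms(2) inj_on_imageI2 by blast
  then have "surj h"
    using assms(1) linear_injective_imp_surjective by blast
  then show "inj f"
    using assms(2) by (metis comp_apply injI inj_eq surj_def)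
qed

lemma inj_stretch_nonzero:
  assumes "inj (\<lambda>x::real^'n::finite. \<chi> i. c i * x$i)"
  shows "c i \<noteq> 0"
proof
  assume "c i = 0"
  then have "(\<chi> j. c j * axis i 1 $ j) = (\<chi> j. c j * (0::real^'n) $ j)"
    by (auto simp: vec_eq_iff axis_def)
  then show False
    using injD[OF assms] by (metis axis_nth zero_index zero_neq_one)
qed

lemma lborel_linear_change:
  fixes f :: "real^'n::finite \<Rightarrow> real^'n"
  assumes "linear f" and "inj f"
  shows "lborel_linear_change f"
proof -
  have "inj f \<longrightarrow> lborel_linear_change f"
  proof (rule induct_linear_elementary[OF \<open>linear f\<close>])
    fix f h :: "real^'n \<Rightarrow> real^'n"
    assume "linear f" "linear h" "inj f \<longrightarrow> lborel_linear_change f" "inj h \<longrightarrow> lborel_linear_change h"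
    then show "inj (f \<circ> h) \<longrightarrow> lborel_linear_change (f \<circ> h)"
      using inj_comp_linear[of h f] by (auto intro: lborel_linear_change_comp)
  next
    fix f :: "real^'n \<Rightarrow> real^'n" and i
    assume "linear f" and zero: "\<And>x. f x $ i = 0"
    have "f x \<noteq> axis i 1" for x
      using zero[of x] by (metis axis_nth zero_neq_one)
    then have "\<not> surj f"
      by (metis surjE)
    then show "inj f \<longrightarrow> lborel_linear_change f"
      using \<open>linear f\<close> linear_injective_imp_surjective by blast
  next
    fix c :: "'n \<Rightarrow> real"
    show "inj (\<lambda>x. \<chi> i. c i * x$i) \<longrightarrow> lborel_linear_change (\<lambda>x::real^'n. \<chi> i. c i * x$i)"
      using inj_stretch_nonzero lborel_linear_change_stretch by blast
  next
    fix m k :: 'n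
    assume "m \<noteq> k"
    moreover have "(\<lambda>x::real^'n. \<chi> i. if i = m then x$m + 1 * x$k else x$i)
        = (\<lambda>x. \<chi> i. if i = m then x$m + x$k else x$i)"
      by (simp only: mult_1)
    ultimately show "inj (\<lambda>x::real^'n. \<chi> i. if i = m then x$m + x$k else x$i)
        \<longrightarrow> lborel_linear_change (\<lambda>x::real^'n. \<chi> i. if i = m then x$m + x$k else x$i)"
      using lborel_linear_change_shear[of m k 1] by metis
  qed (simp add: lborel_linear_change_swap)
  then show ?thesis
    using assms(2) by blast
qed

lemma nn_integral_lborel_affine_matrix:
  fixes A :: "real^'n::finite^'n" and c :: "real^'n"
  assumes "invertible A" and [measurable]: "g \<in> borel_measurable borel"
  shows "(\<integral>\<^sup>+x. g x \<partial>lborel) = ennreal \<bar>det A\<bar> * (\<integral>\<^sup>+x. g (c + A *v x) \<partial>lborel)"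
proof -
  have inj: "inj ((*v) A)"
    using assms(1) unfolding invertible_def by (meson matrix_left_invertible_injective)
  have "(\<lambda>x. g (c + x)) \<in> borel_measurable borel"
    by measurable
  from bspec[OF lborel_linear_change[OF matrix_vector_mul_linear inj, unfolded lborel_linear_change_def] this]
  have "(\<integral>\<^sup>+x. g (c + x) \<partial>lborel) = ennreal \<bar>det A\<bar> * (\<integral>\<^sup>+x. g (c + A *v x) \<partial>lborel)"
    by simp
  moreover have "(\<integral>\<^sup>+x. g (c + x) \<partial>lborel) = (\<integral>\<^sup>+x. g x \<partial>lborel)"
    by (subst (2) lborel_distr_plus[symmetric, of c]) (simp add: nn_integral_distr)
  ultimately show ?thesis
    by simp
qed

section \<open>Gaussian moments\<close>

lemma gauss_density_std:
  fixes u :: "real^'n::finite"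
  shows "gauss_density 0 (mat 1) u = (\<Prod>i\<in>UNIV. std_normal_density (u $ i))"
proof -
  have "matrix_inv (mat 1 :: real^'n^'n) = mat 1"
    by (rule matrix_inv_unique) (auto simp: invertible_def)
  moreover have "(\<Prod>i\<in>UNIV. std_normal_density (u $ i))
      = exp (\<Sum>i\<in>UNIV. - (u $ i)\<^sup>2 / 2) / sqrt (2 * pi) ^ CARD('n)"
    by (simp add: std_normal_density_def normal_density_def prod.distrib exp_sum prod_dividef)
  moreover have "(\<Sum>i\<in>UNIV. - (u $ i)\<^sup>2 / 2) = - (u \<bullet> u) / 2"
    by (simp add: inner_vec_def power2_eq_square sum_divide_distrib sum_negf)
  moreover have "sqrt (2 ^ CARD('n) * pi ^ CARD('n)) = sqrt (2 * pi) ^ CARD('n)"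
    by (metis power_mult_distrib real_sqrt_power)
  ultimately show ?thesis
    by (simp add: gauss_density_def)
qed

lemma gauss_density_affine:
  fixes L :: "real^'n::finite^'n"
  assumes SL: "S = L ** transpose L" and "invertible L"
  shows "gauss_density mu S (mu + L *v u) = gauss_density 0 (mat 1) u / \<bar>det L\<bar>"
proof -
  define R where "R = matrix_inv L"
  have LR: "L ** R = mat 1" and RL: "R ** L = mat 1"
    using assms(2) by (simp_all add: R_def matrix_inv_right matrix_inv_left)
  have "S ** (transpose R ** R) = L ** transpose (R ** L) ** R"
    unfolding SL by (simp add: matrix_mul_assoc matrix_transpose_mul)
  then have "matrix_inv S = transpose R ** R"
    using assms LR RL by (intro matrix_inv_unique) (simp_all add: invertible_mult transpose_invertible)
  then have "(L *v u) \<bullet> (matrix_inv S *v (L *v u)) = (R *v (L *v u)) \<bullet> (R *v (L *v u))"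
    by (simp only: inner_transpose_matrix flip: matrix_vector_mul_assoc)
  then have "(L *v u) \<bullet> (matrix_inv S *v (L *v u)) = u \<bullet> u"
    by (simp add: matrix_vector_mul_assoc RL)
  moreover have "sqrt ((2 * pi) ^ CARD('n) * det S) = sqrt ((2 * pi) ^ CARD('n)) * \<bar>det L\<bar>"
    unfolding SL by (simp add: det_mul real_sqrt_mult flip: power2_eq_square)
  moreover have "det L \<noteq> 0"
    using assms(2) invertible_det_nz by blast
  ultimately show ?thesis
    by (simp add: gauss_density_def matrix_inv_unique[of "mat 1" "mat 1"] invertible_def)
qed

lemma sets_mvn [simp, measurable_cong]: "sets (mvn mu S) = sets borel"
  by (simp add: mvn_def)

lemma space_mvn [simp]: "space (mvn mu S) = UNIV"
  by (simp add: mvn_def)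

lemma borel_measurable_gauss_density [measurable]: "gauss_density mu S \<in> borel_measurable borel"
  unfolding gauss_density_def by measurable

lemma mvn_eq_distr_std:
  fixes L :: "real^'n::finite^'n"
  assumes "S = L ** transpose L" and "invertible L"
  shows "mvn mu S = distr (mvn 0 (mat 1)) borel (\<lambda>u. mu + L *v u)"
proof (rule measure_eqI)
  fix A assume "A \<in> sets (mvn mu S)"
  then have [measurable]: "A \<in> sets borel"
    by simp
  have "det L \<noteq> 0"
    using assms(2) invertible_det_nz by blast
  have "emeasure (mvn mu S) A = (\<integral>\<^sup>+v. ennreal (gauss_density mu S v) * indicator A v \<partial>lborel)"
    by (simp add: mvn_def emeasure_density)
  also have "\<dots> = ennreal \<bar>det L\<bar>
      * (\<integral>\<^sup>+u. ennreal (gauss_density mu S (mu + L *v u)) * indicator A (mu + L *v u) \<partial>lborel)"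
    using assms(2) by (rule nn_integral_lborel_affine_matrix) measurable
  also have "\<dots> = (\<integral>\<^sup>+u. ennreal (gauss_density 0 (mat 1) u) * indicator A (mu + L *v u) \<partial>lborel)"
    using \<open>det L \<noteq> 0\<close>
    by (simp add: gauss_density_affine[OF assms] flip: nn_integral_cmult ennreal_mult' mult.assoc)
  also have "\<dots> = emeasure (mvn 0 (mat 1)) ((\<lambda>u. mu + L *v u) -` A)"
  proof -
    have "(\<lambda>u. mu + L *v u) -` A \<in> sets borel"
      using measurable_sets_borel[of "\<lambda>u. mu + L *v u" borel A] by simp
    then show ?thesis
      by (simp add: mvn_def emeasure_density indicator_def)
  qed
  also have "\<dots> = emeasure (distr (mvn 0 (mat 1)) borel (\<lambda>u. mu + L *v u)) A"
    by (simp add: emeasure_distr)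
  finally show "emeasure (mvn mu S) A = emeasure (distr (mvn 0 (mat 1)) borel (\<lambda>u. mu + L *v u)) A" .
qed simp

lemma std_mvn_integral_prod:
  fixes h :: "'n::finite \<Rightarrow> real \<Rightarrow> real"
  assumes [measurable]: "\<And>i. h i \<in> borel_measurable borel"
    and h: "\<And>i. integrable lborel (\<lambda>x. std_normal_density x * h i x)"
  shows "integrable (mvn 0 (mat 1)) (\<lambda>u::real^'n. \<Prod>i\<in>UNIV. h i (u $ i))"
    and "(\<integral>u. (\<Prod>i\<in>UNIV. h i (u $ i)) \<partial>mvn 0 (mat 1))
      = (\<Prod>i\<in>UNIV. \<integral>x. std_normal_density x * h i x \<partial>lborel)"
proof -
  interpret product_sigma_finite "\<lambda>_::'n. lborel :: real measure" by standard
  have dens: "gauss_density 0 (mat 1) (\<chi> i. f i) * (\<Prod>i\<in>UNIV. h i (f i))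
      = (\<Prod>i\<in>UNIV. std_normal_density (f i) * h i (f i))" for f :: "'n \<Rightarrow> real"
    by (simp add: gauss_density_std prod.distrib)
  have nonneg: "AE u in lborel. 0 \<le> gauss_density 0 (mat 1) (u :: real^'n)"
    by (simp add: gauss_density_std prod_nonneg)
  have "integrable (PiM UNIV (\<lambda>_. lborel)) (\<lambda>f. \<Prod>i\<in>UNIV. std_normal_density (f i) * h i (f i))"
    using h by (intro product_integrable_prod) auto
  then show "integrable (mvn 0 (mat 1)) (\<lambda>u::real^'n. \<Prod>i\<in>UNIV. h i (u $ i))"
    unfolding mvn_def using nonneg
    by (subst integrable_density) (simp_all add: dens lborel_vec_PiM integrable_distr_eq)
  have "(\<integral>u. (\<Prod>i\<in>UNIV. h i (u $ i)) \<partial>mvn 0 (mat 1))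
      = (\<integral>f. (\<Prod>i\<in>UNIV. std_normal_density (f i) * h i (f i)) \<partial>PiM UNIV (\<lambda>_. lborel))"
    unfolding mvn_def using nonneg
    by (subst integral_density) (simp_all add: dens lborel_vec_PiM integral_distr)
  also have "\<dots> = (\<Prod>i\<in>UNIV. \<integral>x. std_normal_density x * h i x \<partial>lborel)"
    using h by (intro product_integral_prod) auto
  finally show "(\<integral>u. (\<Prod>i\<in>UNIV. h i (u $ i)) \<partial>mvn 0 (mat 1))
      = (\<Prod>i\<in>UNIV. \<integral>x. std_normal_density x * h i x \<partial>lborel)" .
qed

lemma prob_space_std_mvn: "prob_space (mvn 0 (mat 1) :: (real^'n::finite) measure)"
proof
  interpret product_sigma_finite "\<lambda>_::'n. lborel :: real measure" by standard
  have "emeasure (mvn 0 (mat 1)) (space (mvn 0 (mat 1) :: (real^'n) measure))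
      = (\<integral>\<^sup>+f. (\<Prod>i\<in>UNIV. ennreal (std_normal_density (f i))) \<partial>PiM UNIV (\<lambda>_::'n. lborel))"
    by (simp add: mvn_def emeasure_density nn_integral_lborel_vec_PiM gauss_density_std prod_ennreal)
  also have "\<dots> = (\<Prod>i\<in>(UNIV::'n set). \<integral>\<^sup>+x. ennreal (std_normal_density x) \<partial>lborel)"
    by (intro product_nn_integral_prod) auto
  also have "(\<integral>\<^sup>+x. ennreal (std_normal_density x) \<partial>lborel) = 1"
    using prob_space.emeasure_space_1[OF prob_space_normal_density[of 1 0]]
    by (simp add: emeasure_density)
  finally show "emeasure (mvn 0 (mat 1)) (space (mvn 0 (mat 1) :: (real^'n) measure)) = 1"
    by simp
qed

lemma prob_space_mvn:
  fixes S :: "real^'n::finite^'n"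
  assumes "pos_def_mat S"
  shows "prob_space (mvn mu S)"
proof -
  obtain L :: "real^'n^'n" where "S = L ** transpose L" and "invertible L"
    using pos_def_mat_factor[OF assms] by blast
  then have "mvn mu S = distr (mvn 0 (mat 1)) borel (\<lambda>u. mu + L *v u)"
    by (rule mvn_eq_distr_std)
  then show ?thesis
    by (simp add: prob_space.prob_space_distr prob_space_std_mvn)
qed

definition std_normal_moment :: "nat \<Rightarrow> real" where
  "std_normal_moment k = (\<integral>x. std_normal_density x * x ^ k \<partial>lborel)"

text \<open>The arguments are written with \<open>Suc\<close>, the normal form of the exponent sums
  \<open>of_bool (i = a) + \<dots>\<close> used below.\<close>

lemma std_normal_moment_values:
  "std_normal_moment 0 = 1" "std_normal_moment (Suc 0) = 0" "std_normal_moment (Suc (Suc 0)) = 1"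
  "std_normal_moment (Suc (Suc (Suc 0))) = 0" "std_normal_moment (Suc (Suc (Suc (Suc 0)))) = 3"
  using integral_std_normal_moment_even[of 0] integral_std_normal_moment_odd[of 0]
    integral_std_normal_moment_even[of 1] integral_std_normal_moment_odd[of 1]
    integral_std_normal_moment_even[of 2]
  by (simp_all add: std_normal_moment_def fact_numeral numeral_eq_Suc)

lemma std_mvn_integral_monomial:
  fixes k :: "'n::finite \<Rightarrow> nat"
  shows "integrable (mvn 0 (mat 1)) (\<lambda>u::real^'n. \<Prod>i\<in>UNIV. u $ i ^ k i)"
    and "(\<integral>u. (\<Prod>i\<in>UNIV. u $ i ^ k i) \<partial>mvn 0 (mat 1))
      = (\<Prod>i\<in>UNIV. std_normal_moment (k i))"
  using std_mvn_integral_prod[of "\<lambda>i x. x ^ k i"] integrable_std_normal_moment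
  by (simp_all add: std_normal_moment_def)

lemma prod_power_of_bool: "(\<Prod>i\<in>UNIV. (u::real^'n::finite) $ i ^ of_bool (i = a)) = u $ a"
proof -
  have "(\<Prod>i\<in>UNIV. u $ i ^ of_bool (i = a)) = (\<Prod>i\<in>UNIV. if i = a then u $ i else 1)"
    by (intro prod.cong) auto
  then show ?thesis
    by simp
qed

lemma std_mvn_coordinate_moment1:
  fixes a :: "'n::finite"
  shows "integrable (mvn 0 (mat 1)) (\<lambda>u::real^'n. u $ a)"
    and "(\<integral>u. u $ a \<partial>mvn 0 (mat 1)) = 0"
proof -
  define k :: "'n \<Rightarrow> nat" where "k i = of_bool (i = a)" for i
  have eq: "u $ a = (\<Prod>i\<in>UNIV. u $ i ^ k i)" for u :: "real^'n"
    by (simp add: k_def prod_power_of_bool)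
  show "integrable (mvn 0 (mat 1)) (\<lambda>u::real^'n. u $ a)"
    unfolding eq by (rule std_mvn_integral_monomial)
  have "(\<Prod>i\<in>UNIV. std_normal_moment (k i)) = (\<Prod>i\<in>{a}. std_normal_moment (k i))"
    by (rule prod.mono_neutral_right) (auto simp: k_def std_normal_moment_values)
  then show "(\<integral>u. u $ a \<partial>mvn 0 (mat 1)) = 0"
    unfolding eq std_mvn_integral_monomial(2) by (simp add: k_def std_normal_moment_values)
qed

lemma std_mvn_coordinate_moment2:
  fixes a b :: "'n::finite"
  shows "integrable (mvn 0 (mat 1)) (\<lambda>u::real^'n. u $ a * u $ b)"
    and "(\<integral>u. u $ a * u $ b \<partial>mvn 0 (mat 1)) = of_bool (a = b)"
proof -
  define k :: "'n \<Rightarrow> nat" where "k i = of_bool (i = a) + of_bool (i = b)" for i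
  have eq: "u $ a * u $ b = (\<Prod>i\<in>UNIV. u $ i ^ k i)" for u :: "real^'n"
    by (simp add: k_def power_add prod.distrib prod_power_of_bool)
  show "integrable (mvn 0 (mat 1)) (\<lambda>u::real^'n. u $ a * u $ b)"
    unfolding eq by (rule std_mvn_integral_monomial)
  have "(\<Prod>i\<in>UNIV. std_normal_moment (k i)) = (\<Prod>i\<in>{a, b}. std_normal_moment (k i))"
    by (rule prod.mono_neutral_right) (auto simp: k_def std_normal_moment_values)
  also have "\<dots> = of_bool (a = b)"
    by (cases "a = b") (simp_all add: k_def std_normal_moment_values)
  finally show "(\<integral>u. u $ a * u $ b \<partial>mvn 0 (mat 1)) = of_bool (a = b)"
    unfolding eq std_mvn_integral_monomial(2) .
qed

lemma std_mvn_coordinate_moment4: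
  fixes a b c d :: "'n::finite"
  shows "integrable (mvn 0 (mat 1)) (\<lambda>u::real^'n. u $ a * u $ b * u $ c * u $ d)"
    and "(\<integral>u. u $ a * u $ b * u $ c * u $ d \<partial>mvn 0 (mat 1))
      = of_bool (a = b) * of_bool (c = d) + of_bool (a = c) * of_bool (b = d) + of_bool (a = d) * of_bool (b = c)"
proof -
  define k :: "'n \<Rightarrow> nat" where "k i = of_bool (i = a) + of_bool (i = b) + of_bool (i = c) + of_bool (i = d)" for i
  have eq: "u $ a * u $ b * u $ c * u $ d = (\<Prod>i\<in>UNIV. u $ i ^ k i)" for u :: "real^'n"
    by (simp add: k_def power_add prod.distrib prod_power_of_bool)
  show "integrable (mvn 0 (mat 1)) (\<lambda>u::real^'n. u $ a * u $ b * u $ c * u $ d)"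
    unfolding eq by (rule std_mvn_integral_monomial)
  have "(\<Prod>i\<in>UNIV. std_normal_moment (k i)) = (\<Prod>i\<in>{a, b, c, d}. std_normal_moment (k i))"
    by (rule prod.mono_neutral_right) (auto simp: k_def std_normal_moment_values)
  also have "\<dots> = of_bool (a = b) * of_bool (c = d) + of_bool (a = c) * of_bool (b = d)
      + of_bool (a = d) * of_bool (b = c)"
    by (cases "a = b"; cases "a = c"; cases "a = d"; cases "b = c"; cases "b = d"; cases "c = d")
      (simp_all add: k_def std_normal_moment_values prod.insert_if)
  finally show "(\<integral>u. u $ a * u $ b * u $ c * u $ d \<partial>mvn 0 (mat 1))
      = of_bool (a = b) * of_bool (c = d) + of_bool (a = c) * of_bool (b = d) + of_bool (a = d) * of_bool (b = c)"
    unfolding eq std_mvn_integral_monomial(2) .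
qed

lemma sum_mult_of_bool_eq_UNIV:
  fixes f :: "'a::finite \<Rightarrow> real"
  shows "(\<Sum>x\<in>UNIV. f x * of_bool (x = a)) = f a" and "(\<Sum>x\<in>UNIV. f x * of_bool (a = x)) = f a"
  by (simp_all add: of_bool_def if_distrib[of "(*) _"] cong: if_cong)

lemma sum_sum_of_bool_separate:
  fixes f g :: "'a::finite \<Rightarrow> real"
  shows "(\<Sum>a\<in>UNIV. \<Sum>b\<in>UNIV. f a * g b * (of_bool (a = c) * of_bool (b = d))) = f c * g d"
proof -
  have "(\<Sum>a\<in>UNIV. \<Sum>b\<in>UNIV. f a * g b * (of_bool (a = c) * of_bool (b = d)))
      = (\<Sum>a\<in>UNIV. f a * of_bool (a = c)) * (\<Sum>b\<in>UNIV. g b * of_bool (b = d))"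
    unfolding sum_product by (simp only: ac_simps)
  then show ?thesis
    by (simp only: sum_mult_of_bool_eq_UNIV)
qed

lemma sum_sum_of_bool_diag:
  fixes f g :: "'a::finite \<Rightarrow> real"
  shows "(\<Sum>a\<in>UNIV. \<Sum>b\<in>UNIV. f a * g b * (of_bool (a = b) * e)) = (\<Sum>a\<in>UNIV. f a * g a) * e"
proof -
  have "(\<Sum>a\<in>UNIV. \<Sum>b\<in>UNIV. f a * g b * (of_bool (a = b) * e))
      = (\<Sum>a\<in>UNIV. f a * e * (\<Sum>b\<in>UNIV. g b * of_bool (a = b)))"
    by (simp only: sum_distrib_left ac_simps)
  then show ?thesis
    by (simp add: sum_mult_of_bool_eq_UNIV sum_distrib_left sum_distrib_right ac_simps)
qed

lemma inner_mult_inner_eq_sum: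
  fixes p q u :: "real^'n::finite"
  shows "(p \<bullet> u) * (q \<bullet> u) = (\<Sum>a\<in>UNIV. \<Sum>b\<in>UNIV. p $ a * q $ b * (u $ a * u $ b))"
  by (simp add: inner_vec_def sum_product ac_simps)

lemma std_mvn_linear_moment1:
  fixes p :: "real^'n::finite"
  shows "integrable (mvn 0 (mat 1)) (\<lambda>u. p \<bullet> u)" and "(\<integral>u. p \<bullet> u \<partial>mvn 0 (mat 1)) = 0"
  by (simp_all add: inner_vec_def std_mvn_coordinate_moment1)

lemma std_mvn_linear_moment2:
  fixes p q :: "real^'n::finite"
  shows "integrable (mvn 0 (mat 1)) (\<lambda>u. (p \<bullet> u) * (q \<bullet> u))"
    and "(\<integral>u. (p \<bullet> u) * (q \<bullet> u) \<partial>mvn 0 (mat 1)) = p \<bullet> q"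
proof -
  show "integrable (mvn 0 (mat 1)) (\<lambda>u. (p \<bullet> u) * (q \<bullet> u))"
    unfolding inner_mult_inner_eq_sum by (simp add: std_mvn_coordinate_moment2)
  have "(\<integral>u. (p \<bullet> u) * (q \<bullet> u) \<partial>mvn 0 (mat 1)) = (\<Sum>a\<in>UNIV. \<Sum>b\<in>UNIV. p $ a * q $ b * of_bool (a = b))"
    unfolding inner_mult_inner_eq_sum by (simp add: std_mvn_coordinate_moment2)
  also have "\<dots> = p \<bullet> q"
    by (simp add: sum_distrib_left[symmetric] mult.assoc sum_mult_of_bool_eq_UNIV inner_vec_def)
  finally show "(\<integral>u. (p \<bullet> u) * (q \<bullet> u) \<partial>mvn 0 (mat 1)) = p \<bullet> q" .
qed

lemma std_mvn_linear_coordinate_moment4: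
  fixes p q :: "real^'n::finite"
  shows "integrable (mvn 0 (mat 1)) (\<lambda>u. (p \<bullet> u) * (q \<bullet> u) * (u $ c * u $ d))"
    and "(\<integral>u. (p \<bullet> u) * (q \<bullet> u) * (u $ c * u $ d) \<partial>mvn 0 (mat 1))
      = (p \<bullet> q) * of_bool (c = d) + p $ c * q $ d + p $ d * q $ c"
proof -
  have eq: "(p \<bullet> u) * (q \<bullet> u) * (u $ c * u $ d)
      = (\<Sum>a\<in>UNIV. \<Sum>b\<in>UNIV. p $ a * q $ b * (u $ a * u $ b * u $ c * u $ d))" for u
    unfolding inner_mult_inner_eq_sum by (simp add: sum_distrib_left sum_distrib_right ac_simps)
  show "integrable (mvn 0 (mat 1)) (\<lambda>u. (p \<bullet> u) * (q \<bullet> u) * (u $ c * u $ d))"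
    unfolding eq by (simp add: std_mvn_coordinate_moment4)
  have "(\<integral>u. (p \<bullet> u) * (q \<bullet> u) * (u $ c * u $ d) \<partial>mvn 0 (mat 1))
      = (\<Sum>a\<in>UNIV. \<Sum>b\<in>UNIV. p $ a * q $ b * (of_bool (a = b) * of_bool (c = d)
          + of_bool (a = c) * of_bool (b = d) + of_bool (a = d) * of_bool (b = c)))"
    unfolding eq by (simp add: std_mvn_coordinate_moment4)
  also have "\<dots> = (p \<bullet> q) * of_bool (c = d) + p $ c * q $ d + p $ d * q $ c"
    by (simp only: distrib_left sum.distrib sum_sum_of_bool_separate sum_sum_of_bool_diag
        inner_vec_def inner_real_def)
  finally show "(\<integral>u. (p \<bullet> u) * (q \<bullet> u) * (u $ c * u $ d) \<partial>mvn 0 (mat 1))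
      = (p \<bullet> q) * of_bool (c = d) + p $ c * q $ d + p $ d * q $ c" .
qed

lemma std_mvn_linear_moment4:
  fixes p q r s :: "real^'n::finite"
  shows "integrable (mvn 0 (mat 1)) (\<lambda>u. (p \<bullet> u) * (q \<bullet> u) * (r \<bullet> u) * (s \<bullet> u))"
    and "(\<integral>u. (p \<bullet> u) * (q \<bullet> u) * (r \<bullet> u) * (s \<bullet> u) \<partial>mvn 0 (mat 1))
      = (p \<bullet> q) * (r \<bullet> s) + (p \<bullet> r) * (q \<bullet> s) + (p \<bullet> s) * (q \<bullet> r)"
proof -
  have eq: "(p \<bullet> u) * (q \<bullet> u) * (r \<bullet> u) * (s \<bullet> u)
      = (\<Sum>c\<in>UNIV. \<Sum>d\<in>UNIV. r $ c * s $ d * ((p \<bullet> u) * (q \<bullet> u) * (u $ c * u $ d)))" for u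
    unfolding inner_mult_inner_eq_sum[of r u s] mult.assoc[of "(p \<bullet> u) * (q \<bullet> u)"]
    by (simp add: sum_distrib_left ac_simps)
  show "integrable (mvn 0 (mat 1)) (\<lambda>u. (p \<bullet> u) * (q \<bullet> u) * (r \<bullet> u) * (s \<bullet> u))"
    unfolding eq by (simp add: std_mvn_linear_coordinate_moment4)
  have "(\<integral>u. (p \<bullet> u) * (q \<bullet> u) * (r \<bullet> u) * (s \<bullet> u) \<partial>mvn 0 (mat 1))
      = (\<Sum>c\<in>UNIV. \<Sum>d\<in>UNIV. r $ c * s $ d * ((p \<bullet> q) * of_bool (c = d) + p $ c * q $ d + p $ d * q $ c))"
    unfolding eq by (simp add: std_mvn_linear_coordinate_moment4)
  also have "\<dots> = (\<Sum>c\<in>UNIV. r$c * s$c) * (p \<bullet> q) + (\<Sum>c\<in>UNIV. r$c * p$c) * (\<Sum>d\<in>UNIV. s$d * q$d)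
        + (\<Sum>c\<in>UNIV. r$c * q$c) * (\<Sum>d\<in>UNIV. s$d * p$d)"
  proof -
    have "r$c * s$d * ((p \<bullet> q) * of_bool (c = d) + p$c * q$d + p$d * q$c)
        = r$c * s$d * (of_bool (c = d) * (p \<bullet> q)) + (r$c * p$c) * (s$d * q$d) + (r$c * q$c) * (s$d * p$d)"
      for c d
      by (simp add: algebra_simps)
    then show ?thesis
      by (simp only: sum.distrib sum_sum_of_bool_diag sum_product)
  qed
  also have "\<dots> = (p \<bullet> q) * (r \<bullet> s) + (p \<bullet> r) * (q \<bullet> s) + (p \<bullet> s) * (q \<bullet> r)"
    by (simp add: inner_vec_def ac_simps)
  finally show "(\<integral>u. (p \<bullet> u) * (q \<bullet> u) * (r \<bullet> u) * (s \<bullet> u) \<partial>mvn 0 (mat 1))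
      = (p \<bullet> q) * (r \<bullet> s) + (p \<bullet> r) * (q \<bullet> s) + (p \<bullet> s) * (q \<bullet> r)" .
qed

lemma mvn_integral_affine:
  fixes L :: "real^'n::finite^'n" and f :: "real^'n \<Rightarrow> real"
  assumes "S = L ** transpose L" and "invertible L" and [measurable]: "f \<in> borel_measurable borel"
  shows "integrable (mvn mu S) f \<longleftrightarrow> integrable (mvn 0 (mat 1)) (\<lambda>u. f (mu + L *v u))"
    and "(\<integral>v. f v \<partial>mvn mu S) = (\<integral>u. f (mu + L *v u) \<partial>mvn 0 (mat 1))"
  by (simp_all add: mvn_eq_distr_std[OF assms(1,2)] integrable_distr_eq integral_distr)

lemma mvn_second_moment:
  fixes S :: "real^'n::finite^'n"
  assumes "pos_def_mat S"
  shows "integrable (mvn mu S) (\<lambda>v. (a \<bullet> v) * (b \<bullet> v))"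
    and "(\<integral>v. (a \<bullet> v) * (b \<bullet> v) \<partial>mvn mu S) = a \<bullet> (S *v b) + (a \<bullet> mu) * (b \<bullet> mu)"
proof -
  obtain L :: "real^'n^'n" where L: "S = L ** transpose L" "invertible L"
    using pos_def_mat_factor[OF assms] by blast
  interpret std: prob_space "mvn 0 (mat 1) :: (real^'n) measure"
    by (rule prob_space_std_mvn)
  define p where "p = transpose L *v a"
  define q where "q = transpose L *v b"
  have eq: "(a \<bullet> (mu + L *v u)) * (b \<bullet> (mu + L *v u))
      = (a \<bullet> mu) * (b \<bullet> mu) + (a \<bullet> mu) * (q \<bullet> u) + (b \<bullet> mu) * (p \<bullet> u) + (p \<bullet> u) * (q \<bullet> u)" for u
    by (simp add: p_def q_def inner_matrix_vector_eq_transpose algebra_simps)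
  show "integrable (mvn mu S) (\<lambda>v. (a \<bullet> v) * (b \<bullet> v))"
    by (simp add: mvn_integral_affine[OF L] eq std_mvn_linear_moment1 std_mvn_linear_moment2)
  have "(\<integral>v. (a \<bullet> v) * (b \<bullet> v) \<partial>mvn mu S) = (a \<bullet> mu) * (b \<bullet> mu) + p \<bullet> q"
    using std.prob_space by (simp add: mvn_integral_affine[OF L] eq std_mvn_linear_moment1 std_mvn_linear_moment2)
  also have "p \<bullet> q = a \<bullet> (S *v b)"
    by (simp only: p_def q_def inner_transpose_transpose L(1))
  finally show "(\<integral>v. (a \<bullet> v) * (b \<bullet> v) \<partial>mvn mu S) = a \<bullet> (S *v b) + (a \<bullet> mu) * (b \<bullet> mu)"
    by simp
qed

lemma mvn_fourth_moment:
  fixes S :: "real^'n::finite^'n"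
  assumes "pos_def_mat S"
  shows "integrable (mvn 0 S) (\<lambda>v. (a \<bullet> v) * (b \<bullet> v) * (c \<bullet> v) * (d \<bullet> v))"
    and "(\<integral>v. (a \<bullet> v) * (b \<bullet> v) * (c \<bullet> v) * (d \<bullet> v) \<partial>mvn 0 S)
      = (a \<bullet> (S *v b)) * (c \<bullet> (S *v d)) + (a \<bullet> (S *v c)) * (b \<bullet> (S *v d)) + (a \<bullet> (S *v d)) * (b \<bullet> (S *v c))"
proof -
  obtain L :: "real^'n^'n" where L: "S = L ** transpose L" "invertible L"
    using pos_def_mat_factor[OF assms] by blast
  have eq: "(\<lambda>u. (a \<bullet> (0 + L *v u)) * (b \<bullet> (0 + L *v u)) * (c \<bullet> (0 + L *v u)) * (d \<bullet> (0 + L *v u)))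
      = (\<lambda>u. ((transpose L *v a) \<bullet> u) * ((transpose L *v b) \<bullet> u) * ((transpose L *v c) \<bullet> u)
          * ((transpose L *v d) \<bullet> u))"
    by (simp only: add_0_left inner_matrix_vector_eq_transpose)
  show "integrable (mvn 0 S) (\<lambda>v. (a \<bullet> v) * (b \<bullet> v) * (c \<bullet> v) * (d \<bullet> v))"
    by (subst mvn_integral_affine[OF L]) (simp_all only: eq std_mvn_linear_moment4 borel_measurable_inner
        borel_measurable_times measurable_ident_sets borel_measurable_const)
  show "(\<integral>v. (a \<bullet> v) * (b \<bullet> v) * (c \<bullet> v) * (d \<bullet> v) \<partial>mvn 0 S)
      = (a \<bullet> (S *v b)) * (c \<bullet> (S *v d)) + (a \<bullet> (S *v c)) * (b \<bullet> (S *v d)) + (a \<bullet> (S *v d)) * (b \<bullet> (S *v c))"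
    by (subst mvn_integral_affine[OF L]) (simp_all only: eq std_mvn_linear_moment4 inner_transpose_transpose
        L(1)[symmetric] borel_measurable_inner borel_measurable_times measurable_ident_sets borel_measurable_const)
qed

lemma mvn_quadratic_form:
  fixes S Q :: "real^'n::finite^'n"
  assumes pd: "pos_def_mat S"
  shows "integrable (mvn mu S) (\<lambda>v. v \<bullet> (Q *v v))"
    and "(\<integral>v. v \<bullet> (Q *v v) \<partial>mvn mu S) = trace (Q ** S) + mu \<bullet> (Q *v mu)"
proof -
  have eq: "(\<lambda>v. v \<bullet> (Q *v v)) = (\<lambda>v. \<Sum>k\<in>UNIV. (axis k 1 \<bullet> v) * (Q $ k \<bullet> v))"
    by (simp add: inner_matrix_vector_sum_rows)
  show "integrable (mvn mu S) (\<lambda>v. v \<bullet> (Q *v v))"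
    unfolding eq by (simp add: mvn_second_moment[OF pd])
  have "(\<integral>v. v \<bullet> (Q *v v) \<partial>mvn mu S)
      = (\<Sum>k\<in>UNIV. axis k 1 \<bullet> (S *v Q $ k)) + (\<Sum>k\<in>UNIV. (axis k 1 \<bullet> mu) * (Q $ k \<bullet> mu))"
    unfolding eq by (simp add: mvn_second_moment[OF pd] sum.distrib)
  also have "\<dots> = trace (Q ** S) + mu \<bullet> (Q *v mu)"
    unfolding sum_diag_eq_trace[OF pos_def_mat_symmetric[OF pd]] inner_matrix_vector_sum_rows[of mu] ..
  finally show "(\<integral>v. v \<bullet> (Q *v v) \<partial>mvn mu S) = trace (Q ** S) + mu \<bullet> (Q *v mu)" .
qed

lemma mvn_weighted_quadratic_form:
  fixes S B :: "real^'n::finite^'n"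
  assumes pd: "pos_def_mat S"
  shows "integrable (mvn 0 S) (\<lambda>v. (b \<bullet> v) * (b \<bullet> v) * (v \<bullet> (B *v v)))"
    and "(\<integral>v. (b \<bullet> v) * (b \<bullet> v) * (v \<bullet> (B *v v)) \<partial>mvn 0 S)
      = (b \<bullet> (S *v b)) * trace (B ** S) + 2 * ((S *v b) \<bullet> (B *v (S *v b)))"
proof -
  have sym: "b \<bullet> (S *v y) = y \<bullet> (S *v b)" for y
    by (rule inner_symmetric_matrix[OF pos_def_mat_symmetric[OF pd]])
  have eq: "(\<lambda>v. (b \<bullet> v) * (b \<bullet> v) * (v \<bullet> (B *v v)))
      = (\<lambda>v. \<Sum>k\<in>UNIV. (b \<bullet> v) * (b \<bullet> v) * (axis k 1 \<bullet> v) * (B $ k \<bullet> v))"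
    by (simp add: inner_matrix_vector_sum_rows sum_distrib_left mult.assoc)
  show "integrable (mvn 0 S) (\<lambda>v. (b \<bullet> v) * (b \<bullet> v) * (v \<bullet> (B *v v)))"
    unfolding eq by (simp add: mvn_fourth_moment[OF pd])
  have "(\<integral>v. (b \<bullet> v) * (b \<bullet> v) * (v \<bullet> (B *v v)) \<partial>mvn 0 S)
      = (b \<bullet> (S *v b)) * (\<Sum>k\<in>UNIV. axis k 1 \<bullet> (S *v B $ k))
        + 2 * (\<Sum>k\<in>UNIV. (axis k 1 \<bullet> (S *v b)) * (B $ k \<bullet> (S *v b)))"
    unfolding eq by (simp add: mvn_fourth_moment[OF pd] sum.distrib sum_distrib_left sym[of "axis _ 1"]
        sym[of "B $ _"])
  also have "\<dots> = (b \<bullet> (S *v b)) * trace (B ** S) + 2 * ((S *v b) \<bullet> (B *v (S *v b)))"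
    unfolding sum_diag_eq_trace[OF pos_def_mat_symmetric[OF pd]] inner_matrix_vector_sum_rows[of "S *v b"] ..
  finally show "(\<integral>v. (b \<bullet> v) * (b \<bullet> v) * (v \<bullet> (B *v v)) \<partial>mvn 0 S)
      = (b \<bullet> (S *v b)) * trace (B ** S) + 2 * ((S *v b) \<bullet> (B *v (S *v b)))" .
qed

section \<open>The loss of plain training\<close>

lemma PiM_component_integral:
  fixes f :: "'a \<Rightarrow> real"
  assumes "prob_space M" and "i \<in> I" and [measurable]: "f \<in> borel_measurable M"
  shows "integrable (PiM I (\<lambda>_. M)) (\<lambda>X. f (X i)) \<longleftrightarrow> integrable M f"
    and "(\<integral>X. f (X i) \<partial>PiM I (\<lambda>_. M)) = (\<integral>x. f x \<partial>M)"
proof -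
  have comp: "(\<lambda>X. X i) \<in> measurable (PiM I (\<lambda>_. M)) M"
    using assms(2) by (rule measurable_component_singleton)
  have "distr (PiM I (\<lambda>_. M)) M (\<lambda>X. X i) = M"
    using assms(1,2) by (rule distr_PiM_component)
  then show "integrable (PiM I (\<lambda>_. M)) (\<lambda>X. f (X i)) \<longleftrightarrow> integrable M f"
    and "(\<integral>X. f (X i) \<partial>PiM I (\<lambda>_. M)) = (\<integral>x. f x \<partial>M)"
    using integrable_distr_eq[OF comp assms(3)] integral_distr[OF comp assms(3)] by simp_all
qed

lemma PiM_two_components_integral:
  fixes f g :: "'a \<Rightarrow> real"
  assumes "prob_space M" and "finite I" and "i \<in> I" "j \<in> I" "i \<noteq> j"
    and f: "integrable M f" and g: "integrable M g"
  shows "integrable (PiM I (\<lambda>_. M)) (\<lambda>X. f (X i) * g (X j))"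
    and "(\<integral>X. f (X i) * g (X j) \<partial>PiM I (\<lambda>_. M)) = (\<integral>x. f x \<partial>M) * (\<integral>x. g x \<partial>M)"
proof -
  interpret M: prob_space M by fact
  interpret product_sigma_finite "\<lambda>_::'b. M" ..
  define h where "h k = (if k = i then f else if k = j then g else (\<lambda>_. 1))" for k
  have "(\<Prod>k\<in>I. h k (X k)) = (\<Prod>k\<in>I. (if k = i then f (X k) else 1) * (if k = j then g (X k) else 1))"
    for X
    using \<open>i \<noteq> j\<close> by (intro prod.cong) (auto simp: h_def)
  then have "(\<Prod>k\<in>I. h k (X k)) = f (X i) * g (X j)" for X
    using assms(2-4) by (simp add: prod.distrib)
  moreover have "(\<Prod>k\<in>I. integral\<^sup>L M (h k))
      = (\<Prod>k\<in>I. (if k = i then integral\<^sup>L M f else 1) * (if k = j then integral\<^sup>L M g else 1))"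
    using \<open>i \<noteq> j\<close> M.prob_space by (intro prod.cong) (auto simp: h_def)
  then have "(\<Prod>k\<in>I. integral\<^sup>L M (h k)) = (\<integral>x. f x \<partial>M) * (\<integral>x. g x \<partial>M)"
    using assms(2-4) by (simp add: prod.distrib)
  moreover have "integrable M (h k)" for k
    using f g by (simp add: h_def)
  ultimately show "integrable (PiM I (\<lambda>_. M)) (\<lambda>X. f (X i) * g (X j))"
    and "(\<integral>X. f (X i) * g (X j) \<partial>PiM I (\<lambda>_. M)) = (\<integral>x. f x \<partial>M) * (\<integral>x. g x \<partial>M)"
    using product_integrable_prod[OF assms(2), of h] product_integral_prod[OF assms(2), of h] by simp_all
qed

lemma integral_sum_sum:
  fixes f :: "'i \<Rightarrow> 'j \<Rightarrow> 'a \<Rightarrow> real"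
  assumes "\<And>i j. i \<in> I \<Longrightarrow> j \<in> J \<Longrightarrow> integrable M (f i j)"
  shows "integrable M (\<lambda>x. \<Sum>i\<in>I. \<Sum>j\<in>J. f i j x)"
    and "(\<integral>x. (\<Sum>i\<in>I. \<Sum>j\<in>J. f i j x) \<partial>M) = (\<Sum>i\<in>I. \<Sum>j\<in>J. \<integral>x. f i j x \<partial>M)"
  using assms by (simp_all add: Bochner_Integration.integral_sum)

lemma sum_sum_if_eq:
  fixes Dg Off :: real
  shows "(\<Sum>i<n. \<Sum>j<n. if i = j then Dg else Off) = real n * Dg + (real n * real n - real n) * Off"
proof -
  have "(\<Sum>j<n. if i = j then Dg else Off) = Dg + (real n - 1) * Off" if "i < n" for i
  proof -
    have "(\<Sum>j<n. if i = j then Dg else Off) = (\<Sum>j<n. Off + (if i = j then Dg - Off else 0))"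
      by (intro sum.cong) auto
    then show ?thesis
      using that by (simp add: sum.distrib algebra_simps)
  qed
  then have "(\<Sum>i<n. \<Sum>j<n. if i = j then Dg else Off) = (\<Sum>i<n. Dg + (real n - 1) * Off)"
    by (intro sum.cong) auto
  then show ?thesis
    by (simp add: algebra_simps)
qed

text \<open>\<open>data_vector n b X\<close> is \<open>X\<^sup>T y\<close> for the labels \<open>y\<^sub>i = X i \<bullet> b\<close>.\<close>

definition data_vector :: "nat \<Rightarrow> real^'d::finite \<Rightarrow> (nat \<Rightarrow> real^'d) \<Rightarrow> real^'d" where
  "data_vector n b X = (\<Sum>i<n. (X i \<bullet> b) *\<^sub>R X i)"

lemma integral_data_vector_inner:
  fixes S :: "real^'d::finite^'d"
  assumes pd: "pos_def_mat S"
  shows "integrable (PiM {..<n} (\<lambda>_. mvn 0 S)) (\<lambda>X. data_vector n b X \<bullet> c)"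
    and "(\<integral>X. data_vector n b X \<bullet> c \<partial>PiM {..<n} (\<lambda>_. mvn 0 S)) = real n * (b \<bullet> (S *v c))"
proof -
  have P: "prob_space (mvn 0 S)"
    by (rule prob_space_mvn[OF pd])
  have eq: "data_vector n b X \<bullet> c = (\<Sum>i<n. (b \<bullet> X i) * (c \<bullet> X i))" for X
    unfolding data_vector_def inner_sum_left by (intro sum.cong) (auto simp: inner_commute)
  have "integrable (PiM {..<n} (\<lambda>_. mvn 0 S)) (\<lambda>X. (b \<bullet> X i) * (c \<bullet> X i))"
    and "(\<integral>X. (b \<bullet> X i) * (c \<bullet> X i) \<partial>PiM {..<n} (\<lambda>_. mvn 0 S)) = b \<bullet> (S *v c)"
    if "i < n" for i
    using PiM_component_integral[OF P, of i "{..<n}" "\<lambda>x. (b \<bullet> x) * (c \<bullet> x)"] that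
      mvn_second_moment[OF pd, where mu=0] by simp_all
  then show "integrable (PiM {..<n} (\<lambda>_. mvn 0 S)) (\<lambda>X. data_vector n b X \<bullet> c)"
    and "(\<integral>X. data_vector n b X \<bullet> c \<partial>PiM {..<n} (\<lambda>_. mvn 0 S)) = real n * (b \<bullet> (S *v c))"
    unfolding eq by (auto simp: Bochner_Integration.integral_sum)
qed

lemma PiM_mvn_cross_moment:
  fixes S B :: "real^'d::finite^'d"
  assumes pd: "pos_def_mat S" and "finite I" and "i \<in> I" "j \<in> I" "i \<noteq> j"
  shows "integrable (PiM I (\<lambda>_. mvn 0 S)) (\<lambda>X. (b \<bullet> X i) * (b \<bullet> X j) * (X i \<bullet> (B *v X j)))"
    and "(\<integral>X. (b \<bullet> X i) * (b \<bullet> X j) * (X i \<bullet> (B *v X j)) \<partial>PiM I (\<lambda>_. mvn 0 S))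
      = (S *v b) \<bullet> (B *v (S *v b))"
proof -
  let ?P = "PiM I (\<lambda>_. mvn 0 S)"
  have P: "prob_space (mvn 0 S)"
    by (rule prob_space_mvn[OF pd])
  have sym: "b \<bullet> (S *v y) = y \<bullet> (S *v b)" for y
    by (rule inner_symmetric_matrix[OF pos_def_mat_symmetric[OF pd]])
  have split: "(\<lambda>X. (b \<bullet> X i) * (b \<bullet> X j) * (X i \<bullet> (B *v X j)))
      = (\<lambda>X. \<Sum>k\<in>UNIV. ((b \<bullet> X i) * (axis k 1 \<bullet> X i)) * ((b \<bullet> X j) * (B $ k \<bullet> X j)))"
    by (simp add: fun_eq_iff inner_matrix_vector_sum_rows[of "X i" for X] sum_distrib_left ac_simps)
  have "integrable ?P (\<lambda>X. ((b \<bullet> X i) * (axis k 1 \<bullet> X i)) * ((b \<bullet> X j) * (B $ k \<bullet> X j)))"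
    and "(\<integral>X. ((b \<bullet> X i) * (axis k 1 \<bullet> X i)) * ((b \<bullet> X j) * (B $ k \<bullet> X j)) \<partial>?P)
      = (axis k 1 \<bullet> (S *v b)) * (B $ k \<bullet> (S *v b))" for k
    using PiM_two_components_integral[OF P assms(2-5), of "\<lambda>x. (b \<bullet> x) * (axis k 1 \<bullet> x)"
        "\<lambda>x. (b \<bullet> x) * (B $ k \<bullet> x)"] mvn_second_moment[OF pd, where mu=0]
    by (simp_all add: sym)
  then show "integrable ?P (\<lambda>X. (b \<bullet> X i) * (b \<bullet> X j) * (X i \<bullet> (B *v X j)))"
    and "(\<integral>X. (b \<bullet> X i) * (b \<bullet> X j) * (X i \<bullet> (B *v X j)) \<partial>?P) = (S *v b) \<bullet> (B *v (S *v b))"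
    by (simp_all add: split inner_matrix_vector_sum_rows[of "S *v b"])
qed

lemma integral_data_vector_quadratic:
  fixes S B :: "real^'d::finite^'d"
  assumes pd: "pos_def_mat S"
  shows "integrable (PiM {..<n} (\<lambda>_. mvn 0 S)) (\<lambda>X. data_vector n b X \<bullet> (B *v data_vector n b X))"
    and "(\<integral>X. data_vector n b X \<bullet> (B *v data_vector n b X) \<partial>PiM {..<n} (\<lambda>_. mvn 0 S))
      = real n * (b \<bullet> (S *v b)) * trace (B ** S) + (real n * real n + real n) * ((S *v b) \<bullet> (B *v (S *v b)))"
proof -
  let ?P = "PiM {..<n} (\<lambda>_. mvn 0 S)"
  have P: "prob_space (mvn 0 S)"
    by (rule prob_space_mvn[OF pd])
  define Dg where "Dg = (b \<bullet> (S *v b)) * trace (B ** S) + 2 * ((S *v b) \<bullet> (B *v (S *v b)))"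
  define Off where "Off = (S *v b) \<bullet> (B *v (S *v b))"
  define T where "T i j X = (b \<bullet> X i) * (b \<bullet> X j) * (X i \<bullet> (B *v X j))" for i j and X :: "nat \<Rightarrow> real^'d"
  have eq: "data_vector n b X \<bullet> (B *v data_vector n b X) = (\<Sum>i<n. \<Sum>j<n. T i j X)" for X
  proof -
    have Bz: "B *v data_vector n b X = (\<Sum>j<n. (X j \<bullet> b) *\<^sub>R (B *v X j))"
      by (simp add: data_vector_def vec.sum matrix_vector_mult_scaleR)
    have T_eq: "T i j X = ((X i \<bullet> b) *\<^sub>R X i) \<bullet> ((X j \<bullet> b) *\<^sub>R (B *v X j))" for i j
      by (simp add: T_def inner_commute)
    show ?thesis
      unfolding Bz unfolding data_vector_def inner_sum_left inner_sum_right
      by (simp only: T_eq) (rule sum.swap)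
  qed
  have T: "integrable ?P (\<lambda>X. T i j X) \<and> (\<integral>X. T i j X \<partial>?P) = (if i = j then Dg else Off)"
    if "i < n" "j < n" for i j
  proof (cases "i = j")
    case True
    then show ?thesis
      using PiM_component_integral[OF P, of i "{..<n}" "\<lambda>x. (b \<bullet> x) * (b \<bullet> x) * (x \<bullet> (B *v x))"] that
        mvn_weighted_quadratic_form[OF pd] by (simp add: T_def Dg_def)
  next
    case False
    then show ?thesis
      using PiM_mvn_cross_moment[OF pd _ _ _ False, of "{..<n}" b B] that by (simp add: T_def Off_def)
  qed
  then show "integrable ?P (\<lambda>X. data_vector n b X \<bullet> (B *v data_vector n b X))"
    unfolding eq by (intro integral_sum_sum) auto
  have "(\<integral>X. data_vector n b X \<bullet> (B *v data_vector n b X) \<partial>?P) = (\<Sum>i<n. \<Sum>j<n. if i = j then Dg else Off)"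
    unfolding eq using T by (subst integral_sum_sum(2)) (auto intro!: sum.cong)
  then show "(\<integral>X. data_vector n b X \<bullet> (B *v data_vector n b X) \<partial>?P)
      = real n * (b \<bullet> (S *v b)) * trace (B ** S) + (real n * real n + real n) * ((S *v b) \<bullet> (B *v (S *v b)))"
    by (simp add: sum_sum_if_eq Dg_def Off_def algebra_simps)
qed

text \<open>The squared error of plain training, averaged over context and query for a fixed task vector
  \<open>b\<close>, is \<open>b \<bullet> (beta_loss_matrix n Sx W *v b)\<close>.\<close>

definition beta_loss_matrix :: "nat \<Rightarrow> real^'d::finite^'d \<Rightarrow> real^'d^'d \<Rightarrow> real^'d^'d" where
  "beta_loss_matrix n S W = (real n * trace (transpose W ** S ** W ** S)) *\<^sub>R S
     + (real n * real n + real n) *\<^sub>R (S ** transpose W ** S ** W ** S)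
     - (2 * real n) *\<^sub>R (S ** transpose W ** S) + S"

lemma integral_data_loss:
  fixes S W :: "real^'d::finite^'d" and b :: "real^'d" and n :: nat
  assumes pd: "pos_def_mat S"
  defines "g X \<equiv> W *v data_vector n b X - b"
  shows "integrable (PiM {..<n} (\<lambda>_. mvn 0 S)) (\<lambda>X. g X \<bullet> (S *v g X))"
    and "(\<integral>X. g X \<bullet> (S *v g X) \<partial>PiM {..<n} (\<lambda>_. mvn 0 S)) = b \<bullet> (beta_loss_matrix n S W *v b)"
proof -
  let ?P = "PiM {..<n} (\<lambda>_. mvn 0 S)"
  interpret P: prob_space ?P
    using prob_space_mvn[OF pd] by (rule prob_space_PiM)
  define B where "B = transpose W ** S ** W"
  define c where "c = transpose W *v (S *v b)"
  have sym: "x \<bullet> (S *v y) = y \<bullet> (S *v x)" for x y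
    by (rule inner_symmetric_matrix[OF pos_def_mat_symmetric[OF pd]])
  have eq: "g X \<bullet> (S *v g X) = data_vector n b X \<bullet> (B *v data_vector n b X) - 2 * (data_vector n b X \<bullet> c)
      + b \<bullet> (S *v b)" for X
  proof -
    have "(W *v z) \<bullet> (S *v (W *v z)) = z \<bullet> (B *v z)" and "(W *v z) \<bullet> (S *v b) = z \<bullet> c" for z
      by (simp_all only: B_def c_def inner_transpose_matrix flip: matrix_vector_mul_assoc)
    then show ?thesis
      by (simp add: g_def matrix_vector_mult_diff_distrib inner_diff_left inner_diff_right
          sym[of b "W *v data_vector n b X"])
  qed
  show "integrable ?P (\<lambda>X. g X \<bullet> (S *v g X))"
    unfolding eq by (simp add: integral_data_vector_quadratic[OF pd] integral_data_vector_inner[OF pd])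
  have "(\<integral>X. g X \<bullet> (S *v g X) \<partial>?P)
      = real n * (b \<bullet> (S *v b)) * trace (B ** S) + (real n * real n + real n) * ((S *v b) \<bullet> (B *v (S *v b)))
        - 2 * (real n * (b \<bullet> (S *v c))) + b \<bullet> (S *v b)"
    unfolding eq using P.prob_space
    by (simp add: integral_data_vector_quadratic[OF pd] integral_data_vector_inner[OF pd])
  also have "\<dots> = b \<bullet> (beta_loss_matrix n S W *v b)"
  proof -
    have "(S *v b) \<bullet> (B *v (S *v b)) = b \<bullet> ((S ** transpose W ** S ** W ** S) *v b)"
      using sym[of b "B *v (S *v b)"] by (simp only: B_def inner_commute matrix_vector_mul_assoc matrix_mul_assoc)
    moreover have "b \<bullet> (S *v c) = b \<bullet> ((S ** transpose W ** S) *v b)"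
      by (simp only: c_def matrix_vector_mul_assoc matrix_mul_assoc)
    ultimately show ?thesis
      by (simp add: beta_loss_matrix_def B_def matrix_vector_mult_add_rdistrib matrix_vector_mult_diff_rdistrib
          inner_add_right inner_diff_right flip: scaleR_matrix_vector_assoc)
  qed
  finally show "(\<integral>X. g X \<bullet> (S *v g X) \<partial>?P) = b \<bullet> (beta_loss_matrix n S W *v b)" .
qed

lemma predictor_update_query:
  "(predictor n W 0 b (X(n := y)) - (X(n := y)) n \<bullet> b)\<^sup>2
    = ((W *v data_vector n b X - b) \<bullet> y) * ((W *v data_vector n b X - b) \<bullet> y)"
proof -
  have "(\<Sum>i<n. ((X(n := y)) i \<bullet> b) *\<^sub>R (X(n := y)) i) = data_vector n b X"
    unfolding data_vector_def by (intro sum.cong) auto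
  then have "predictor n W 0 b (X(n := y)) - (X(n := y)) n \<bullet> b = y \<bullet> (W *v data_vector n b X - b)"
    by (simp add: predictor_def inner_diff_right)
  then show ?thesis
    by (simp add: power2_eq_square inner_commute)
qed

lemma beta_loss_matrix_nonneg:
  assumes "pos_def_mat Sx"
  shows "0 \<le> b \<bullet> (beta_loss_matrix n Sx W *v b)"
  using integral_data_loss(2)[OF assms, where W=W and n=n and b=b, symmetric] pos_def_mat_nonneg[OF assms]
  by (auto intro!: Bochner_Integration.integral_nonneg)

lemma nn_integral_data_query_loss:
  fixes Sx W :: "real^'d::finite^'d"
  assumes pdx: "pos_def_mat Sx"
  shows "(\<integral>\<^sup>+xs. ennreal ((predictor n W 0 b xs - xs n \<bullet> b)\<^sup>2) \<partial>PiM {..n} (\<lambda>_. mvn 0 Sx))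
    = ennreal (b \<bullet> (beta_loss_matrix n Sx W *v b))"
proof -
  interpret x: prob_space "mvn 0 Sx"
    by (rule prob_space_mvn[OF pdx])
  interpret product_sigma_finite "\<lambda>_::nat. mvn 0 Sx" ..
  define g where "g X = W *v data_vector n b X - b" for X
  have query: "(\<integral>\<^sup>+y. ennreal ((g X \<bullet> y) * (g X \<bullet> y)) \<partial>mvn 0 Sx) = ennreal (g X \<bullet> (Sx *v g X))" for X
    using mvn_second_moment[OF pdx, where mu=0] by (subst nn_integral_eq_integral) auto
  have data: "(\<integral>\<^sup>+X. ennreal (g X \<bullet> (Sx *v g X)) \<partial>PiM {..<n} (\<lambda>_. mvn 0 Sx))
      = ennreal (b \<bullet> (beta_loss_matrix n Sx W *v b))"
    using integral_data_loss[OF pdx, where W=W and n=n and b=b] pos_def_mat_nonneg[OF pdx]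
    by (subst nn_integral_eq_integral) (auto simp: g_def)
  have ins: "{..n} = insert n {..<n}"
    by auto
  have "(\<lambda>xs. ennreal ((predictor n W 0 b xs - xs n \<bullet> b)\<^sup>2)) \<in> borel_measurable (PiM {..n} (\<lambda>_. mvn 0 Sx))"
    unfolding predictor_def by measurable
  then have "(\<integral>\<^sup>+xs. ennreal ((predictor n W 0 b xs - xs n \<bullet> b)\<^sup>2) \<partial>PiM {..n} (\<lambda>_. mvn 0 Sx))
      = (\<integral>\<^sup>+X. (\<integral>\<^sup>+y. ennreal ((predictor n W 0 b (X(n := y)) - (X(n := y)) n \<bullet> b)\<^sup>2) \<partial>mvn 0 Sx)
          \<partial>PiM {..<n} (\<lambda>_. mvn 0 Sx))"
    unfolding ins by (subst product_nn_integral_insert) auto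
  also have "\<dots> = ennreal (b \<bullet> (beta_loss_matrix n Sx W *v b))"
    by (simp only: predictor_update_query g_def[symmetric] query data)
  finally show ?thesis .
qed

lemma task_loss_plain:
  fixes Sx Sb W :: "real^'d::finite^'d"
  assumes pdx: "pos_def_mat Sx" and pdb: "pos_def_mat Sb"
  shows "(\<integral>z. (predictor n W 0 (fst z) (snd z) - snd z n \<bullet> fst z)\<^sup>2 \<partial>task_measure n Sx mu Sb)
    = trace (beta_loss_matrix n Sx W ** Sb) + mu \<bullet> (beta_loss_matrix n Sx W *v mu)"
proof -
  let ?F = "\<lambda>z. (predictor n W 0 (fst z) (snd z) - snd z n \<bullet> fst z)\<^sup>2"
  let ?Q = "beta_loss_matrix n Sx W"
  let ?Xq = "PiM {..n} (\<lambda>_. mvn 0 Sx)"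
  interpret Xq: prob_space ?Xq
    using prob_space_mvn[OF pdx] by (rule prob_space_PiM)
  have F_measurable: "?F \<in> borel_measurable (mvn mu Sb \<Otimes>\<^sub>M ?Xq)"
    unfolding predictor_def by measurable
  have "(\<integral>\<^sup>+z. ennreal (?F z) \<partial>(mvn mu Sb \<Otimes>\<^sub>M ?Xq)) = (\<integral>\<^sup>+b. ennreal (b \<bullet> (?Q *v b)) \<partial>mvn mu Sb)"
    using F_measurable by (simp add: Xq.nn_integral_fst[symmetric] nn_integral_data_query_loss[OF pdx])
  also have "\<dots> = ennreal (trace (?Q ** Sb) + mu \<bullet> (?Q *v mu))"
    using mvn_quadratic_form[OF pdb, where Q="?Q" and mu=mu] beta_loss_matrix_nonneg[OF pdx]
    by (subst nn_integral_eq_integral) auto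
  moreover have "0 \<le> trace (?Q ** Sb) + mu \<bullet> (?Q *v mu)"
    using Bochner_Integration.integral_nonneg[of "mvn mu Sb" "\<lambda>v. v \<bullet> (?Q *v v)"]
      beta_loss_matrix_nonneg[OF pdx] mvn_quadratic_form(2)[OF pdb, where Q="?Q" and mu=mu] by simp
  ultimately have "has_bochner_integral (mvn mu Sb \<Otimes>\<^sub>M ?Xq) ?F (trace (?Q ** Sb) + mu \<bullet> (?Q *v mu))"
    using F_measurable by (intro has_bochner_integral_nn_integral) auto
  then show ?thesis
    unfolding task_measure_def by (rule has_bochner_integral_integral_eq)
qed

lemma mt_loss_plain:
  fixes Sx :: "real^'d::finite^'d" and Sb :: "'k::finite \<Rightarrow> real^'d^'d"
  assumes "pos_def_mat Sx" and "\<And>k. pos_def_mat (Sb k)"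
  shows "mt_loss n Sx prob mu Sb W (\<lambda>_. 0)
    = trace (beta_loss_matrix n Sx W ** (\<Sum>k\<in>UNIV. prob k *\<^sub>R (Sb k + outer (mu k) (mu k))))"
  using assms
  by (simp add: mt_loss_def task_loss_plain trace_mul_scaleR_sum matrix_add_ldistrib trace_add trace_outer)

section \<open>Minimizing the loss\<close>

lemma trace_quadratic_complete_square:
  fixes P S W0 D C :: "real^'n^'n"
  assumes "transpose P = P" and "transpose S = S" and "S ** W0 ** P = C"
  shows "trace (P ** transpose (W0 + D) ** S ** (W0 + D)) - 2 * trace (transpose (W0 + D) ** C)
    = trace (P ** transpose W0 ** S ** W0) - 2 * trace (transpose W0 ** C) + trace (P ** transpose D ** S ** D)"
proof -
  have "trace (P ** transpose D ** S ** W0) = trace (P ** (transpose D ** S ** W0))"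
    by (simp add: matrix_mul_assoc)
  also have "\<dots> = trace ((transpose D ** S ** W0) ** P)"
    by (rule trace_mul_sym)
  also have "\<dots> = trace (transpose D ** C)"
    using assms(3) by (simp add: matrix_mul_assoc[symmetric])
  finally have cross: "trace (P ** transpose D ** S ** W0) = trace (transpose D ** C)" .
  have "trace (P ** transpose (W0 + D) ** S ** (W0 + D))
      = trace (P ** transpose W0 ** S ** W0) + trace (P ** transpose W0 ** S ** D)
        + trace (P ** transpose D ** S ** W0) + trace (P ** transpose D ** S ** D)"
    by (simp add: transpose_add matrix_add_ldistrib matrix_add_rdistrib trace_add)
  then show ?thesis
    using cross trace_symmetric_form_commute[OF assms(1,2), of W0 D]
    by (simp add: transpose_add matrix_add_rdistrib trace_add)
qed

lemma trace_beta_loss_matrix: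
  fixes S M W :: "real^'d::finite^'d" and n :: nat
  defines "P \<equiv> (real n + 1) *\<^sub>R (S ** M ** S) + trace (S ** M) *\<^sub>R S"
  shows "trace (beta_loss_matrix n S W ** M)
    = real n * (trace (P ** transpose W ** S ** W) - 2 * trace (transpose W ** (S ** M ** S))) + trace (S ** M)"
proof -
  have c1: "trace (transpose W ** S ** W ** S) = trace (S ** transpose W ** S ** W)"
    using trace_mul_sym[of "transpose W ** S ** W" S] by (simp add: matrix_mul_assoc)
  have c2: "trace (S ** transpose W ** S ** W ** S ** M) = trace (S ** M ** S ** transpose W ** S ** W)"
    using trace_mul_sym[of "S ** transpose W ** S ** W" "S ** M"] by (simp add: matrix_mul_assoc)
  have c3: "trace (S ** transpose W ** S ** M) = trace (transpose W ** (S ** M ** S))"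
    using trace_mul_sym[of S "transpose W ** S ** M"] by (simp add: matrix_mul_assoc)
  have "trace (beta_loss_matrix n S W ** M)
      = real n * trace (S ** transpose W ** S ** W) * trace (S ** M)
        + (real n * real n + real n) * trace (S ** M ** S ** transpose W ** S ** W)
        - 2 * real n * trace (transpose W ** (S ** M ** S)) + trace (S ** M)"
    unfolding beta_loss_matrix_def
    by (simp add: matrix_add_rdistrib matrix_diff_rdistrib trace_add trace_sub trace_scaleR c1 c2 c3
        flip: scalar_matrix_assoc)
  then show ?thesis
    unfolding P_def
    by (simp add: matrix_add_rdistrib trace_add trace_scaleR algebra_simps flip: scalar_matrix_assoc)
qed

lemma trace_quadratic_unique_minimizer:
  fixes P S W0 W1 C :: "real^'n^'n"
  assumes pdP: "pos_def_mat P" and pdS: "pos_def_mat S" and "S ** W0 ** P = C"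
    and "trace (P ** transpose W1 ** S ** W1) - 2 * trace (transpose W1 ** C)
      \<le> trace (P ** transpose W0 ** S ** W0) - 2 * trace (transpose W0 ** C)"
  shows "W1 = W0"
proof (rule ccontr)
  assume "W1 \<noteq> W0"
  then have "0 < trace (P ** transpose (W1 - W0) ** S ** (W1 - W0))"
    by (intro trace_pos_def_quadratic_pos pdP pdS) simp
  then show False
    using assms(4) trace_quadratic_complete_square[OF pos_def_mat_symmetric[OF pdP]
        pos_def_mat_symmetric[OF pdS] assms(3), of "W1 - W0"]
    by simp
qed

lemma plain_loss_minimizer:
  fixes S M W1 :: "real^'d::finite^'d"
  assumes "n \<ge> 1" and pdS: "pos_def_mat S" and pdM: "pos_def_mat M"
    and min: "\<And>W. trace (beta_loss_matrix n S W1 ** M) \<le> trace (beta_loss_matrix n S W ** M)"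
  defines "G \<equiv> (real n + 1) *\<^sub>R (S ** M) + trace (S ** M) *\<^sub>R mat 1"
  shows "S ** W1 = (S ** M) ** matrix_inv G"
    and "trace (beta_loss_matrix n S W1 ** M) = trace (S ** M) - real n * trace ((S ** W1) ** (S ** M))"
proof -
  define t where "t = trace (S ** M)"
  define P where "P = (real n + 1) *\<^sub>R (S ** M ** S) + t *\<^sub>R S"
  define C where "C = S ** M ** S"
  define W0 where "W0 = matrix_inv S ** (S ** M) ** matrix_inv G"
  have pdP: "pos_def_mat P"
    unfolding P_def t_def using pdS pdM trace_pos_def_mul_pos[OF pdS pdM]
    by (intro pos_def_mat_congruence_combination) simp_all
  have invS: "invertible S"
    by (rule pos_def_mat_invertible[OF pdS])
  have P_eq: "P = G ** S"
    by (simp add: P_def G_def t_def matrix_add_rdistrib flip: scalar_matrix_assoc)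
  then have "G = P ** matrix_inv S"
    using invS by (simp flip: matrix_mul_assoc add: matrix_inv_right)
  then have invG: "invertible G"
    using pos_def_mat_invertible[OF pdP] invS
    by (metis invertible_mult invertible_def matrix_inv_left matrix_inv_right)
  have SW0: "S ** W0 = (S ** M) ** matrix_inv G"
    using invS by (simp add: W0_def matrix_mul_assoc matrix_inv_right)
  have "matrix_inv G ** (G ** S) = S"
    using matrix_inv_left[OF invG] by (simp add: matrix_mul_assoc)
  then have stationary: "S ** W0 ** P = C"
    by (simp add: SW0 P_eq C_def flip: matrix_mul_assoc)
  have loss: "trace (beta_loss_matrix n S W ** M)
      = real n * (trace (P ** transpose W ** S ** W) - 2 * trace (transpose W ** C)) + t" for W
    unfolding P_def C_def t_def by (rule trace_beta_loss_matrix)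
  have "W1 = W0"
    using min[of W0] \<open>n \<ge> 1\<close>
    by (intro trace_quadratic_unique_minimizer[OF pdP pdS stationary]) (simp add: loss)
  then show "S ** W1 = (S ** M) ** matrix_inv G"
    by (simp add: SW0)
  have "trace (P ** transpose W0 ** S ** W0) = trace (transpose W0 ** C)"
    using trace_mul_sym[of P "transpose W0 ** S ** W0"] stationary
    by (simp add: matrix_mul_assoc[symmetric])
  moreover have "trace ((S ** W0) ** (S ** M)) = trace (transpose W0 ** C)"
  proof -
    have "trace ((S ** W0) ** (S ** M)) = trace (transpose (W0 ** (S ** M ** S)))"
      using trace_mul_sym[of S "W0 ** (S ** M)"] by (simp add: matrix_mul_assoc trace_transpose)
    also have "\<dots> = trace (transpose W0 ** C)"
      using trace_mul_sym[of "S ** M ** S" "transpose W0"] pdS pdM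
      by (simp add: C_def matrix_transpose_mul pos_def_mat_symmetric matrix_mul_assoc)
    finally show ?thesis .
  qed
  ultimately show "trace (beta_loss_matrix n S W1 ** M) = trace (S ** M) - real n * trace ((S ** W1) ** (S ** M))"
    by (simp add: \<open>W1 = W0\<close> loss t_def)
qed

theorem theorem1:
  fixes n :: nat
    and Sx :: "real^'d^'d"
    and prob :: "'k::finite \<Rightarrow> real"
    and mu :: "'k \<Rightarrow> real^'d"
    and Sb :: "'k \<Rightarrow> real^'d^'d"
    and W_PT :: "real^'d^'d"
  assumes n_pos: "n \<ge> 1"
    and Sx_pd: "pos_def_mat Sx"
    and Sb_pd: "\<And>k. pos_def_mat (Sb k)"
    and probnonneg: "\<And>k. prob k \<ge> 0"
    and probsum: "(\<Sum>k\<in>UNIV. prob k) = 1"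
    and W_min: "\<And>W. mt_loss n Sx prob mu Sb W_PT (\<lambda>_. 0) \<le> mt_loss n Sx prob mu Sb W (\<lambda>_. 0)"
  shows "Sx ** W_PT = Sigma_tilde Sx prob mu Sb **
           matrix_inv ((real n + 1) *\<^sub>R Sigma_tilde Sx prob mu Sb
                       + trace (Sigma_tilde Sx prob mu Sb) *\<^sub>R mat 1)
       \<and> mt_loss n Sx prob mu Sb W_PT (\<lambda>_. 0) =
           trace (Sigma_tilde Sx prob mu Sb)
           - real n * trace ((Sx ** W_PT) ** Sigma_tilde Sx prob mu Sb)"
proof -
  define M where "M = (\<Sum>k\<in>UNIV. prob k *\<^sub>R (Sb k + outer (mu k) (mu k)))"
  have Sigma: "Sigma_tilde Sx prob mu Sb = Sx ** M"
    by (simp add: Sigma_tilde_def M_def)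
  have loss: "mt_loss n Sx prob mu Sb W (\<lambda>_. 0) = trace (beta_loss_matrix n Sx W ** M)" for W
    unfolding M_def by (rule mt_loss_plain[OF Sx_pd Sb_pd])
  have "pos_def_mat M"
    unfolding M_def by (rule pos_def_mat_mixture[OF Sb_pd probnonneg probsum])
  from plain_loss_minimizer[OF n_pos Sx_pd this, of W_PT] W_min
  show ?thesis
    unfolding Sigma loss by simp
qed

end
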